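(* (1) For every integer $n\ge 8$, the minimum of ${\rm cc}(G)$ over all $2$-connected graphs $G$ of order $n$ with girth at least $4$ equals $6$. (2) For every integer $n\ge 10$, the minimum of ${\rm cc}(G)$ over all $2$-connected graphs $G$ of order $n$ with girth at least $5$ equals $8$. (3) For every even integer $n\ge 12$, the minimum of ${\rm cc}(G)$ over all $2$-connected graphs $G$ of order $n$ with girth at least $6$ equals $8$; for every odd integer $n\ge 13$, this minimum equals $9$.
   Context: All graphs are finite and simple. The girth of a graph is the length of a shortest cycle. A cummerbund of a graph is a longest cycle; ${\rm cc}(G)$ is the number of vertices of $G$ lying in at least one cummerbund. *)

theory Defs
  imports Main
begin

definition simple_graph :: "'a set \<Rightarrow> ('a \<Rightarrow> 'a \<Rightarrow> bool) \<Rightarrow> bool" where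
  "simple_graph V E \<longleftrightarrow> finite V \<and> (\<forall>x y. E x y \<longrightarrow> x \<in> V \<and> y \<in> V)
     \<and> (\<forall>x y. E x y \<longrightarrow> E y x) \<and> (\<forall>x. \<not> E x x)"

definition is_cycle :: "('a \<Rightarrow> 'a \<Rightarrow> bool) \<Rightarrow> 'a list \<Rightarrow> bool" where
  "is_cycle E c \<longleftrightarrow> length c \<ge> 3 \<and> distinct c
     \<and> (\<forall>i < length c. E (c ! i) (c ! ((i + 1) mod length c)))"

definition girth_at_least :: "('a \<Rightarrow> 'a \<Rightarrow> bool) \<Rightarrow> nat \<Rightarrow> bool" where
  "girth_at_least E g \<longleftrightarrow> (\<forall>c. is_cycle E c \<longrightarrow> length c \<ge> g)"

definition connected_on :: "'a set \<Rightarrow> ('a \<Rightarrow> 'a \<Rightarrow> bool) \<Rightarrow> bool" where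
  "connected_on W E \<longleftrightarrow> W \<noteq> {} \<and>
     (\<forall>u\<in>W. \<forall>w\<in>W. (\<lambda>x y. x \<in> W \<and> y \<in> W \<and> E x y)\<^sup>*\<^sup>* u w)"

definition two_connected :: "'a set \<Rightarrow> ('a \<Rightarrow> 'a \<Rightarrow> bool) \<Rightarrow> bool" where
  "two_connected V E \<longleftrightarrow> card V > 2 \<and>
     (\<forall>S. S \<subseteq> V \<and> card S < 2 \<longrightarrow> connected_on (V - S) E)"

definition cummerbund :: "('a \<Rightarrow> 'a \<Rightarrow> bool) \<Rightarrow> 'a list \<Rightarrow> bool" where
  "cummerbund E c \<longleftrightarrow> is_cycle E c \<and> (\<forall>c'. is_cycle E c' \<longrightarrow> length c' \<le> length c)"

definition cc :: "'a set \<Rightarrow> ('a \<Rightarrow> 'a \<Rightarrow> bool) \<Rightarrow> nat" where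
  "cc V E = card {v \<in> V. \<exists>c. cummerbund E c \<and> v \<in> set c}"

text \<open>Values of cc over all 2-connected graphs of order n with girth at least g
  (every finite graph is isomorphic to one with natural-number vertices).\<close>
definition cc_values :: "nat \<Rightarrow> nat \<Rightarrow> nat set" where
  "cc_values n g = {cc V E | (V :: nat set) E. simple_graph V E \<and> card V = n
      \<and> two_connected V E \<and> girth_at_least E g}"

definition is_minimum :: "nat set \<Rightarrow> nat \<Rightarrow> bool" where
  "is_minimum S m \<longleftrightarrow> m \<in> S \<and> (\<forall>x\<in>S. m \<le> x)"

end

theory Submission
  imports Defs
begin

text \<open>
  The upper bounds come from theta graphs: two hubs joined by internally disjoint paths. If
  the two paths with the most inner vertices are strictly longer than all others, their union
  is the unique longest cycle, so cc is its length, while the number and lengths of the other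
  paths fix the order and keep the girth.

  For the lower bounds let \<open>C\<close> be a longest cycle. In a 2-connected graph every vertex off
  \<open>C\<close> lies on an ear of \<open>C\<close>, a path outside \<open>C\<close> between two vertices of \<open>C\<close>. An ear with
  \<open>m\<close> inner vertices whose ends are \<open>d\<close> steps apart on \<open>C\<close> closes cycles of lengths
  \<open>m + 1 + d\<close> and \<open>m + 1 + |C| - d\<close>, both between the girth and \<open>|C|\<close>, and if one of them
  is longest the ear lies on a cummerbund. This arithmetic settles all circumferences except
  6 and 7 for girth 5 and 8 for girth 6. There, two disjoint ears with the same ends close a
  short cycle, and two crossing ears with \<open>p\<close> and \<open>q\<close> inner vertices close a cycle of
  length at least \<open>(|C| + 4)/2 + p + q\<close>. If cc is too small, every vertex off \<open>C\<close> lies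
  on an ear with one inner vertex, and the ears of distinct vertices must share an end, which is
  impossible for two vertices on a hexagon and for three on a heptagon; and on an octagon with
  \<open>cc = 8\<close> every vertex off \<open>C\<close> has exactly one neighbour off \<open>C\<close>, so the order is even.
\<close>

section \<open>Cycles and walks as lists\<close>

lemma successively_upt_iff:
  "successively R [i..<n] \<longleftrightarrow> (\<forall>k. i \<le> k \<longrightarrow> Suc k < n \<longrightarrow> R k (Suc k))"
proof -
  have "(\<forall>m. Suc m < n - i \<longrightarrow> R (i + m) (i + Suc m)) \<longleftrightarrow> (\<forall>k. i \<le> k \<longrightarrow> Suc k < n \<longrightarrow> R k (Suc k))"
  proof (intro iffI allI impI)
    assume H: "\<forall>m. Suc m < n - i \<longrightarrow> R (i + m) (i + Suc m)"
    fix k assume "i \<le> k" "Suc k < n"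
    then have "Suc (k - i) < n - i" by linarith
    then have "R (i + (k - i)) (i + Suc (k - i))" using H by blast
    then show "R k (Suc k)" using \<open>i \<le> k\<close> by simp
  qed auto
  then show ?thesis by (simp add: successively_conv_nth del: upt_Suc)
qed

lemma is_cycle_iff:
  "is_cycle E c \<longleftrightarrow> 3 \<le> length c \<and> distinct c \<and> successively E c \<and> E (last c) (hd c)"
proof
  assume a: "is_cycle E c"
  then have L: "3 \<le> length c" "distinct c" and e: "\<forall>i<length c. E (c ! i) (c ! ((i + 1) mod length c))"
    by (auto simp: is_cycle_def)
  have "successively E c"
    unfolding successively_conv_nth
  proof (intro allI impI)
    fix i assume "Suc i < length c"
    then show "E (c ! i) (c ! Suc i)" using e[rule_format, of i] by simp
  qed
  moreover have "E (last c) (hd c)"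
  proof -
    have "length c - 1 < length c" using L by simp
    from e[rule_format, OF this] L show ?thesis
    proof -
      have ne: "c \<noteq> []" using L by auto
      have "(length c - 1 + 1) mod length c = 0" using L by (cases "length c") auto
      then show ?thesis using e[rule_format, OF \<open>length c - 1 < length c\<close>] ne
        by (simp add: last_conv_nth hd_conv_nth)
    qed
  qed
  ultimately show "3 \<le> length c \<and> distinct c \<and> successively E c \<and> E (last c) (hd c)" using L by simp
next
  assume a: "3 \<le> length c \<and> distinct c \<and> successively E c \<and> E (last c) (hd c)"
  show "is_cycle E c"
    unfolding is_cycle_def
  proof (intro conjI allI impI)
    fix i assume i: "i < length c"
    show "E (c ! i) (c ! ((i + 1) mod length c))"
    proof (cases "Suc i < length c")
      case True then show ?thesis using a successively_nth[of E c i] by simp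
    next
      case False
      then have "i = length c - 1" using i by simp
      have ne: "c \<noteq> []" using a by auto
      have "E (c ! (length c - 1)) (c ! 0)" using a ne by (simp add: last_conv_nth hd_conv_nth)
      moreover obtain n where "length c = Suc n" using ne by (cases c) auto
      ultimately show ?thesis using \<open>i = length c - 1\<close> by simp
    qed
  qed (use a in auto)
qed

definition arc :: "'a list \<Rightarrow> nat \<Rightarrow> nat \<Rightarrow> 'a list" where
  "arc C i j = map ((!) C) [i..<Suc j]"

lemma length_arc [simp]: "length (arc C i j) = Suc j - i"
  by (simp add: arc_def del: upt_Suc)

lemma arc_nonempty: "i \<le> j \<Longrightarrow> arc C i j \<noteq> []"
  by (simp add: arc_def del: upt_Suc)

lemma hd_arc [simp]: "i \<le> j \<Longrightarrow> hd (arc C i j) = C ! i"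
  by (simp add: arc_def hd_map del: upt_Suc)

lemma last_arc [simp]: "i \<le> j \<Longrightarrow> last (arc C i j) = C ! j"
  by (simp add: arc_def last_map del: upt_Suc)

lemma set_arc: "set (arc C i j) = (!) C ` {i..j}"
  by (auto simp: arc_def)

lemma set_arc_subset: "j < length C \<Longrightarrow> set (arc C i j) \<subseteq> set C"
  by (auto simp: set_arc)

lemma distinct_arc: "distinct C \<Longrightarrow> j < length C \<Longrightarrow> distinct (arc C i j)"
  by (auto simp: arc_def distinct_map inj_on_def nth_eq_iff_index_eq)

lemma arcs_disjoint:
  "distinct C \<Longrightarrow> l < length C \<Longrightarrow> j < k \<Longrightarrow> set (arc C i j) \<inter> set (arc C k l) = {}"
  by (auto simp: set_arc nth_eq_iff_index_eq)

lemma successively_arc: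
  assumes "is_cycle E C" "j < length C"
  shows "successively E (arc C i j)"
proof -
  have "E (C ! k) (C ! Suc k)" if "Suc k < length C" for k
    using assms(1) that unfolding is_cycle_def by (metis Suc_eq_plus1 Suc_lessD mod_less)
  then show ?thesis using assms(2) by (simp add: arc_def successively_map successively_upt_iff del: upt_Suc)
qed

lemma cycle_closing_edge:
  assumes "is_cycle E C" shows "E (C ! (length C - 1)) (C ! 0)"
proof -
  have "C \<noteq> []" using assms by (auto simp: is_cycle_def)
  then show ?thesis using assms by (simp add: is_cycle_iff last_conv_nth hd_conv_nth)
qed

lemma interval_propagation:
  fixes Q :: "nat \<Rightarrow> bool"
  assumes start: "Q j" "0 < j" "j < n"
    and step: "\<And>t. 0 < t \<Longrightarrow> t < n \<Longrightarrow> Q t \<Longrightarrow> Q (t - 1) \<and> Q (Suc t)"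
    and i: "i \<le> n"
  shows "Q i"
proof -
  have down: "Q (j - d)" for d
  proof (induction d)
    case (Suc d)
    show ?case
    proof (cases "j - d = 0")
      case False
      then have "Q (j - d - 1)" using step[of "j - d"] Suc start(3) by linarith
      moreover have "j - d - 1 = j - Suc d" by arith
      ultimately show ?thesis by simp
    qed (use Suc in simp)
  qed (use start in simp)
  have up: "j + d \<le> n \<Longrightarrow> Q (j + d)" for d
  proof (induction d)
    case (Suc d)
    then have "Q (j + d)" "0 < j + d" "j + d < n" using start by simp_all
    then show ?case using step[of "j + d"] by simp
  qed (use start in simp)
  show ?thesis
  proof (cases "i \<le> j")
    case True
    then show ?thesis using down[of "j - i"] by simp
  next
    case False
    then show ?thesis using up[of "i - j"] i by simp
  qed
qed

lemma obtain_two_elements: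
  assumes "2 \<le> card A"
  obtains x y where "x \<in> A" "y \<in> A" "x \<noteq> y"
proof -
  obtain T where "T \<subseteq> A" "card T = 2" using obtain_subset_with_card_n[OF assms] by blast
  then show ?thesis using that by (auto simp: card_2_iff)
qed

lemma obtain_three_elements:
  assumes "3 \<le> card A"
  obtains x y z where "x \<in> A" "y \<in> A" "z \<in> A" "x \<noteq> y" "x \<noteq> z" "y \<noteq> z"
proof -
  obtain T where "T \<subseteq> A" "card T = 3" using obtain_subset_with_card_n[OF assms] by blast
  then show ?thesis using that by (auto simp: card_3_iff)
qed

lemma even_card_if_involution:
  assumes "finite A" and "\<And>x. x \<in> A \<Longrightarrow> f x \<in> A \<and> f x \<noteq> x \<and> f (f x) = x"
  shows "even (card A)"
  using assms
proof (induction "card A" arbitrary: A rule: less_induct)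
  case less
  show ?case
  proof (cases "A = {}")
    case False
    then obtain x where x: "x \<in> A" by blast
    let ?B = "A - {x, f x}"
    have pair: "{x, f x} \<subseteq> A" "card {x, f x} = 2" using less.prems(2)[OF x] x by auto
    then have card: "card A = card ?B + 2"
      using card_mono[OF less.prems(1) pair(1)] by (simp add: card_Diff_subset)
    have closed: "f y \<in> ?B \<and> f y \<noteq> y \<and> f (f y) = y" if "y \<in> ?B" for y
      using that less.prems(2) x by (metis DiffE DiffI insertCI insertE singletonD)
    have "even (card ?B)" by (rule less.hyps) (use card less.prems(1) closed in auto)
    then show ?thesis using card by simp
  qed simp
qed

lemma girth_le_length: "girth_at_least E g \<Longrightarrow> is_cycle E c \<Longrightarrow> g \<le> length c"
  unfolding girth_at_least_def by blast

lemma rtranclp_imp_walk: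
  assumes "R\<^sup>*\<^sup>* a b"
  shows "\<exists>p. p \<noteq> [] \<and> hd p = a \<and> last p = b \<and> successively R p"
  using assms
proof (induction rule: converse_rtranclp_induct)
  case base then show ?case by (intro exI[of _ "[b]"]) simp
next
  case (step y z)
  then obtain p where p: "p \<noteq> []" "hd p = z" "last p = b" "successively R p" by blast
  then show ?case using step(1) by (intro exI[of _ "y # p"]) (auto simp: successively_Cons)
qed

lemma walk_imp_path:
  assumes "successively R p" "p \<noteq> []"
  shows "\<exists>q. q \<noteq> [] \<and> distinct q \<and> hd q = hd p \<and> last q = last p \<and> set q \<subseteq> set p \<and> successively R q"
  using assms
proof (induction "length p" arbitrary: p rule: less_induct)
  case less
  show ?case
  proof (cases "distinct p")
    case True then show ?thesis using less by blast
  next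
    case False
    then obtain xs ys zs y where d: "p = xs @ [y] @ ys @ [y] @ zs" using not_distinct_decomp by blast
    let ?p' = "xs @ [y] @ zs"
    have s: "successively R ?p'"
      using less(2) unfolding d
      by (auto simp: successively_append_iff successively_Cons split: if_splits)
    have l: "length ?p' < length p" using d by simp
    have h: "hd ?p' = hd p" using d by (cases xs) auto
    have la: "last ?p' = last p" using d by (cases zs) auto
    have st: "set ?p' \<subseteq> set p" using d by auto
    obtain q where "q \<noteq> [] \<and> distinct q \<and> hd q = hd ?p' \<and> last q = last ?p' \<and> set q \<subseteq> set ?p' \<and> successively R q"
      using less(1)[OF l s] by auto
    then show ?thesis using h la st by auto
  qed
qed

lemma walk_prefix_until:
  assumes "successively R p" "p \<noteq> []" "last p \<in> S"
  shows "\<exists>q. q \<noteq> [] \<and> hd q = hd p \<and> last q \<in> S \<and> (\<forall>x\<in>set (butlast q). x \<notin> S)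
     \<and> set q \<subseteq> set p \<and> successively R q \<and> (distinct p \<longrightarrow> distinct q)"
  using assms
proof (induction p)
  case Nil then show ?case by simp
next
  case (Cons x p)
  show ?case
  proof (cases "x \<in> S")
    case True then show ?thesis by (intro exI[of _ "[x]"]) auto
  next
    case False
    then have pne: "p \<noteq> []" using Cons by auto
    have sp: "successively R p" using Cons(2) by (cases p) (auto simp: successively_Cons)
    have lp: "last p \<in> S" using Cons(4) pne by simp
    obtain q where q: "q \<noteq> []" "hd q = hd p" "last q \<in> S" "\<forall>x\<in>set (butlast q). x \<notin> S"
      "set q \<subseteq> set p" "successively R q" "distinct p \<longrightarrow> distinct q"
      using Cons.IH[OF sp pne lp] by blast
    have "R x (hd p)" using Cons(2) pne by (simp add: successively_Cons)
    then have "successively R (x # q)" using q by (simp add: successively_Cons)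
    moreover have "\<forall>y\<in>set (butlast (x # q)). y \<notin> S" using q False by auto
    moreover have "distinct (x # p) \<longrightarrow> distinct (x # q)" using q by auto
    ultimately show ?thesis using q by (intro exI[of _ "x # q"]) auto
  qed
qed

lemma successively_imp_rtranclp:
  "successively Q p \<Longrightarrow> p \<noteq> [] \<Longrightarrow> Q\<^sup>*\<^sup>* (hd p) (last p)"
proof (induction p)
  case (Cons a p)
  then show ?case
    by (cases p) (auto simp: successively_Cons intro: converse_rtranclp_into_rtranclp)
qed simp

lemma Suc_mod_if: "(i::nat) < L \<Longrightarrow> (i + 1) mod L = (if i + 1 = L then 0 else i + 1)"
  by auto

lemma pred_mod_if: "(i::nat) < L \<Longrightarrow> (i + L - 1) mod L = (if i = 0 then L - 1 else i - 1)"
proof (cases "i = 0")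
  case False
  assume "i < L"
  then have "i + L - 1 = (i - 1) + L" using False by linarith
  then have "(i + L - 1) mod L = (i - 1 + L) mod L" by simp
  also have "\<dots> = (i - 1) mod L" by (rule mod_add_self2)
  also have "\<dots> = i - 1" using \<open>i < L\<close> by simp
  finally show ?thesis using False by simp
qed simp

definition cycle_nbr :: "'a list \<Rightarrow> 'a \<Rightarrow> 'a \<Rightarrow> bool" where
  "cycle_nbr c x y \<longleftrightarrow> (\<exists>i<length c. (c!i = x \<and> c!((i+1) mod length c) = y) \<or> (c!i = y \<and> c!((i+1) mod length c) = x))"

lemma cycle_nbr_sym: "cycle_nbr c x y \<Longrightarrow> cycle_nbr c y x"
  unfolding cycle_nbr_def by blast

lemma cycle_nbr_in_set: "cycle_nbr c x y \<Longrightarrow> x \<in> set c \<and> y \<in> set c"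
  unfolding cycle_nbr_def
  by (metis length_pos_if_in_set mod_less_divisor nth_mem gr_implies_not0 not_gr0 less_nat_zero_code)

lemma cycle_nbr_edge:
  assumes "is_cycle E c" "\<And>x y. E x y \<Longrightarrow> E y x" "cycle_nbr c x y"
  shows "E x y"
  using assms unfolding cycle_nbr_def is_cycle_def by metis

lemma two_cycle_nbrs:
  assumes "is_cycle E c" "x \<in> set c"
  shows "\<exists>y z. y \<noteq> z \<and> cycle_nbr c x y \<and> cycle_nbr c x z"
proof -
  let ?L = "length c"
  obtain i where i: "i < ?L" "c ! i = x" using assms(2) by (metis in_set_conv_nth)
  have L: "3 \<le> ?L" "distinct c" using assms(1) by (auto simp: is_cycle_def)
  define k where "k = (i + ?L - 1) mod ?L"
  have k: "k < ?L" "(k + 1) mod ?L = i"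
  proof -
    show "k < ?L" using L unfolding k_def by (intro mod_less_divisor) auto
    show "(k + 1) mod ?L = i"
    proof (cases "i = 0")
      case True then show ?thesis using L by (cases "length c") (auto simp: k_def)
    next
      case False
      then have "k = i - 1" using i L pred_mod_if[of i ?L] by (simp add: k_def)
      then show ?thesis using False i by simp
    qed
  qed
  have ne: "(i + 1) mod ?L \<noteq> k"
  proof
    assume "(i + 1) mod ?L = k"
    then show False using L i Suc_mod_if[of i ?L] pred_mod_if[of i ?L] unfolding k_def
      by (auto split: if_splits)
  qed
  have "c ! ((i + 1) mod ?L) \<noteq> c ! k"
    using ne L k(1) by (subst nth_eq_iff_index_eq) (auto intro: mod_less_divisor)
  moreover have "cycle_nbr c x (c ! ((i + 1) mod ?L))" using i unfolding cycle_nbr_def by blast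
  moreover have "cycle_nbr c x (c ! k)" using i k unfolding cycle_nbr_def by metis
  ultimately show ?thesis by blast
qed

lemma cycle_nbr_cases:
  assumes "is_cycle E c" "i < length c" "cycle_nbr c (c ! i) y"
  shows "y = c ! ((i + 1) mod length c) \<or> y = c ! ((i + length c - 1) mod length c)"
proof -
  let ?L = "length c"
  have L: "3 \<le> ?L" "distinct c" using assms(1) by (auto simp: is_cycle_def)
  obtain k where k: "k < ?L" and
    h: "(c!k = c!i \<and> c!((k+1) mod ?L) = y) \<or> (c!k = y \<and> c!((k+1) mod ?L) = c!i)"
    using assms(3) unfolding cycle_nbr_def by blast
  have m: "(k+1) mod ?L < ?L" using k by (intro mod_less_divisor) auto
  show ?thesis
  proof (cases "c!k = c!i \<and> c!((k+1) mod ?L) = y")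
    case True
    then have "k = i" using L k assms(2) nth_eq_iff_index_eq by blast
    then show ?thesis using True by simp
  next
    case False
    then have h2: "c!k = y" "c!((k+1) mod ?L) = c!i" using h by auto
    then have ki: "(k+1) mod ?L = i" using L m assms(2) nth_eq_iff_index_eq by blast
    have "k = (i + ?L - 1) mod ?L"
      using ki Suc_mod_if[OF k] pred_mod_if[OF assms(2)] k by (auto split: if_splits)
    then show ?thesis using h2 by simp
  qed
qed

lemma cycle_nbrs_at_most_two:
  assumes "is_cycle E c" "cycle_nbr c x y1" "cycle_nbr c x y2" "cycle_nbr c x y3"
  shows "y1 = y2 \<or> y1 = y3 \<or> y2 = y3"
proof -
  have "x \<in> set c" using assms(2) cycle_nbr_in_set by metis
  then obtain i where i: "i < length c" "x = c ! i" by (metis in_set_conv_nth)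
  show ?thesis using cycle_nbr_cases[OF assms(1) i(1)] assms(2-4) i(2) by metis
qed

section \<open>Theta graphs\<close>

definition theta_edges :: "(nat \<Rightarrow> 'a list) \<Rightarrow> 'a \<Rightarrow> 'a \<Rightarrow> nat \<Rightarrow> 'a \<Rightarrow> 'a \<Rightarrow> bool" where
  "theta_edges M u w K x y \<longleftrightarrow> (\<exists>k<K. \<exists>i. Suc i < length (u # M k @ [w]) \<and>
      ((u # M k @ [w]) ! i = x \<and> (u # M k @ [w]) ! Suc i = y \<or>
       (u # M k @ [w]) ! i = y \<and> (u # M k @ [w]) ! Suc i = x))"

definition theta_vertices :: "(nat \<Rightarrow> 'a list) \<Rightarrow> 'a \<Rightarrow> 'a \<Rightarrow> nat \<Rightarrow> 'a set" where
  "theta_vertices M u w K = {u, w} \<union> (\<Union>k<K. set (M k))"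

locale theta =
  fixes M :: "nat \<Rightarrow> 'a list" and u w :: 'a and K :: nat
  assumes two_le_K: "2 \<le> K"
    and M_nonempty: "\<And>k. k < K \<Longrightarrow> M k \<noteq> []"
    and M_distinct: "\<And>k. k < K \<Longrightarrow> distinct (M k)"
    and u_notin_M: "\<And>k. k < K \<Longrightarrow> u \<notin> set (M k)"
    and w_notin_M: "\<And>k. k < K \<Longrightarrow> w \<notin> set (M k)"
    and uw: "u \<noteq> w"
    and M_disjoint: "\<And>k k'. k < K \<Longrightarrow> k' < K \<Longrightarrow> k \<noteq> k' \<Longrightarrow> set (M k) \<inter> set (M k') = {}"
begin

abbreviation "P k \<equiv> u # M k @ [w]"
abbreviation "E \<equiv> theta_edges M u w K"
abbreviation "V \<equiv> theta_vertices M u w K"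

lemma distinct_path: "k < K \<Longrightarrow> distinct (P k)" using M_distinct u_notin_M w_notin_M uw by auto

lemma E_sym: "E x y \<Longrightarrow> E y x" unfolding theta_edges_def by blast

lemma successively_path: "k < K \<Longrightarrow> successively E (P k)"
  unfolding successively_conv_nth theta_edges_def by blast

lemma E_irrefl: "\<not> E x x"
proof
  assume "E x x"
  then obtain k i where k: "k<K" "Suc i < length (P k)" "P k ! i = x" "P k ! Suc i = x"
    unfolding theta_edges_def by blast
  then show False using distinct_path[OF k(1)] nth_eq_iff_index_eq[of "P k" i "Suc i"] by simp
qed

lemma set_path_subset: "k < K \<Longrightarrow> set (P k) \<subseteq> V"
  unfolding theta_vertices_def by auto

lemma edge_in_V: "E x y \<Longrightarrow> x \<in> V \<and> y \<in> V"
proof -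
  assume "E x y"
  then obtain k i where k: "k<K" "Suc i < length (P k)"
    "(P k ! i = x \<and> P k ! Suc i = y) \<or> (P k ! i = y \<and> P k ! Suc i = x)"
    unfolding theta_edges_def by blast
  have "P k ! i \<in> set (P k)" "P k ! Suc i \<in> set (P k)" using k(2) by (metis nth_mem Suc_lessD)+
  then show ?thesis using k(3) set_path_subset[OF k(1)] by blast
qed

lemma path_nth_inner: "1 \<le> t \<Longrightarrow> t \<le> length (M k) \<Longrightarrow> P k ! t = M k ! (t - 1)"
  by (cases t) (auto simp: nth_append)

lemma inner_vertex_nbrs:
  assumes k: "k < K" and i: "0 < i" "i \<le> length (M k)" and e: "E (P k ! i) y"
  shows "y = P k ! (i - 1) \<or> y = P k ! (i + 1)"
proof -
  let ?x = "P k ! i"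
  have xM: "?x \<in> set (M k)" using path_nth_inner[of i k] i by simp
  obtain k' j where kj: "k'<K" "Suc j < length (P k')"
    "(P k' ! j = ?x \<and> P k' ! Suc j = y) \<or> (P k' ! j = y \<and> P k' ! Suc j = ?x)"
    using e unfolding theta_edges_def by blast
  have "?x \<in> set (P k')" using kj by (metis nth_mem Suc_lessD)
  then have "?x \<in> set (M k')" using xM u_notin_M[OF k] w_notin_M[OF k] by auto
  then have kk: "k' = k" using M_disjoint[OF kj(1) k] xM by blast
  have li: "i < length (P k)" using i by simp
  show ?thesis
  proof (cases "P k' ! j = ?x \<and> P k' ! Suc j = y")
    case True
    then have "j = i" using kk distinct_path[OF k] nth_eq_iff_index_eq[of "P k" j i] kj(2) li by auto
    then show ?thesis using True kk by simp
  next
    case False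
    then have h: "P k ! j = y" "P k ! Suc j = ?x" using kj(3) kk by auto
    then have "Suc j = i" using distinct_path[OF k] nth_eq_iff_index_eq[of "P k" "Suc j" i] kj(2) li kk by auto
    then show ?thesis using h by auto
  qed
qed

lemma hub_nbrs:
  assumes "E u y" shows "\<exists>k<K. y = hd (M k)"
proof -
  obtain k j where kj: "k<K" "Suc j < length (P k)"
    "(P k ! j = u \<and> P k ! Suc j = y) \<or> (P k ! j = y \<and> P k ! Suc j = u)"
    using assms unfolding theta_edges_def by blast
  have d: "distinct (P k)" using distinct_path[OF kj(1)] .
  show ?thesis
  proof (cases "P k ! j = u \<and> P k ! Suc j = y")
    case True
    then have "j = 0" using d nth_eq_iff_index_eq[of "P k" j 0] kj(2) by auto
    then have "y = hd (M k)" using True M_nonempty[OF kj(1)] by (cases "M k") auto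
    then show ?thesis using kj(1) by blast
  next
    case False
    then have "P k ! Suc j = P k ! 0" using kj(3) by auto
    then have "Suc j = 0" using d nth_eq_iff_index_eq[of "P k" "Suc j" 0] kj(2) by auto
    then show ?thesis by simp
  qed
qed

lemma cycle_subset_V: "is_cycle E c \<Longrightarrow> set c \<subseteq> V"
proof
  fix x assume c: "is_cycle E c" and x: "x \<in> set c"
  obtain y z where "cycle_nbr c x y" using two_cycle_nbrs[OF c x] by blast
  then have "E x y" using cycle_nbr_edge[OF c] E_sym by blast
  then show "x \<in> V" using edge_in_V by blast
qed

lemma cycle_nbrs_inner:
  assumes c: "is_cycle E c" and k: "k < K" and j: "j < length (M k)" and x: "M k ! j \<in> set c"
  shows "cycle_nbr c (M k ! j) (P k ! j) \<and> cycle_nbr c (M k ! j) (P k ! (j + 2))"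
proof -
  have xe: "M k ! j = P k ! (j + 1)" using path_nth_inner[of "j+1" k] j by simp
  obtain y z where yz: "y \<noteq> z" "cycle_nbr c (M k ! j) y" "cycle_nbr c (M k ! j) z" using two_cycle_nbrs[OF c x] by blast
  have "E (P k ! (j+1)) y" "E (P k ! (j+1)) z" using yz cycle_nbr_edge[OF c] E_sym xe by metis+
  then have "y = P k ! j \<or> y = P k ! (j + 2)" "z = P k ! j \<or> z = P k ! (j + 2)"
    using inner_vertex_nbrs[OF k, of "j+1"] j by auto
  then show ?thesis using yz by auto
qed

lemma cycle_contains_path:
  assumes c: "is_cycle E c" and k: "k < K" and j: "j < length (M k)" and x: "M k ! j \<in> set c"
  shows "set (P k) \<subseteq> set c"
proof -
  let ?Q = "\<lambda>t. P k ! t \<in> set c"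
  have step: "?Q (t - 1) \<and> ?Q (Suc t)" if "0 < t" "t < length (M k) + 1" "?Q t" for t
  proof -
    have "M k ! (t - 1) \<in> set c" using that path_nth_inner[of t k] by simp
    then have "cycle_nbr c (M k ! (t - 1)) (P k ! (t - 1))" "cycle_nbr c (M k ! (t - 1)) (P k ! (t - 1 + 2))"
      using cycle_nbrs_inner[OF c k, of "t - 1"] that by auto
    moreover have "t - 1 + 2 = Suc t" using that by simp
    ultimately show ?thesis using cycle_nbr_in_set by metis
  qed
  have "?Q (j + 1)" using x path_nth_inner[of "j + 1" k] j by simp
  then have Q: "?Q i" if "i \<le> length (M k) + 1" for i
    using interval_propagation[of ?Q "j + 1" "length (M k) + 1" i] step j that by simp
  show ?thesis
  proof
    fix y assume "y \<in> set (P k)"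
    then obtain i where "i < length (P k)" "y = P k ! i" by (metis in_set_conv_nth)
    then show "y \<in> set c" using Q[of i] by simp
  qed
qed

lemma cycle_inner_vertex_path:
  assumes c: "is_cycle E c" and x: "x \<in> set c" "x \<noteq> u" "x \<noteq> w"
  shows "\<exists>k<K. x \<in> set (M k) \<and> set (P k) \<subseteq> set c"
proof -
  have "x \<in> V" using cycle_subset_V[OF c] x by auto
  then obtain k where k: "k < K" "x \<in> set (M k)" using x unfolding theta_vertices_def by auto
  then obtain j where j: "j < length (M k)" "x = M k ! j" by (metis in_set_conv_nth)
  show ?thesis using cycle_contains_path[OF c k(1) j(1)] j x k by auto
qed

lemma hub_on_cycle:
  assumes c: "is_cycle E c"
  shows "u \<in> set c"
proof -
  have L: "3 \<le> length c" "distinct c" using c by (auto simp: is_cycle_def)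
  have "\<not> set c \<subseteq> {u, w}"
  proof
    assume "set c \<subseteq> {u, w}"
    then have "card (set c) \<le> card {u, w}" by (intro card_mono) auto
    also have "\<dots> \<le> 2" by (simp add: card_insert_le_m1)
    finally show False using L distinct_card[of c] by simp
  qed
  then obtain x where x: "x \<in> set c" "x \<noteq> u" "x \<noteq> w" by blast
  obtain k where "k < K" "set (P k) \<subseteq> set c" using cycle_inner_vertex_path[OF c x] by blast
  then show ?thesis by auto
qed

lemma hub_cycle_nbr:
  assumes c: "is_cycle E c" and k: "k < K" "set (P k) \<subseteq> set c"
  shows "cycle_nbr c u (hd (M k))"
proof -
  have h: "hd (M k) = M k ! 0" using M_nonempty[OF k(1)] by (simp add: hd_conv_nth)
  have "hd (M k) \<in> set c" using k M_nonempty[OF k(1)] by auto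
  then show ?thesis
    using cycle_nbrs_inner[OF c k(1), of 0] M_nonempty[OF k(1)] h cycle_nbr_sym by auto
qed

theorem cycle_is_two_paths:
  assumes c: "is_cycle E c"
  shows "\<exists>k1 k2. k1 < K \<and> k2 < K \<and> k1 \<noteq> k2 \<and> set c = {u,w} \<union> set (M k1) \<union> set (M k2)"
proof -
  obtain y z where yz: "y \<noteq> z" "cycle_nbr c u y" "cycle_nbr c u z"
    using two_cycle_nbrs[OF c hub_on_cycle[OF c]] by blast
  obtain k1 where k1: "k1 < K" "y = hd (M k1)" using hub_nbrs yz(2) cycle_nbr_edge[OF c] E_sym by metis
  obtain k2 where k2: "k2 < K" "z = hd (M k2)" using hub_nbrs yz(3) cycle_nbr_edge[OF c] E_sym by metis
  have k12: "k1 \<noteq> k2" using yz k1 k2 by auto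
  have t1: "set (P k1) \<subseteq> set c"
    using cycle_contains_path[OF c k1(1), of 0] M_nonempty[OF k1(1)] yz(2) k1(2) cycle_nbr_in_set
    by (metis hd_conv_nth length_greater_0_conv)
  have t2: "set (P k2) \<subseteq> set c"
    using cycle_contains_path[OF c k2(1), of 0] M_nonempty[OF k2(1)] yz(3) k2(2) cycle_nbr_in_set
    by (metis hd_conv_nth length_greater_0_conv)
  have "v \<in> {u,w} \<union> set (M k1) \<union> set (M k2)" if v: "v \<in> set c" for v
  proof (cases "v = u \<or> v = w")
    case False
    then obtain k where k: "k < K" "v \<in> set (M k)" "set (P k) \<subseteq> set c"
      using cycle_inner_vertex_path[OF c v] by blast
    then have "hd (M k) = y \<or> hd (M k) = z"
      using hub_cycle_nbr[OF c k(1,3)] cycle_nbrs_at_most_two[OF c yz(2) yz(3)] yz(1) by metis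
    then have "k = k1 \<or> k = k2"
      using M_disjoint[OF k(1) k1(1)] M_disjoint[OF k(1) k2(1)] k1(2) k2(2) M_nonempty k k1 k2
      by (metis disjoint_iff list.set_sel(1))
    then show ?thesis using k by auto
  qed auto
  moreover have "{u,w} \<union> set (M k1) \<union> set (M k2) \<subseteq> set c" using t1 t2 by auto
  ultimately show ?thesis using k1 k2 k12 by blast
qed

lemma card_two_paths:
  assumes "k1 < K" "k2 < K" "k1 \<noteq> k2"
  shows "card ({u,w} \<union> set (M k1) \<union> set (M k2)) = 2 + length (M k1) + length (M k2)"
proof -
  have d: "set (M k1) \<inter> set (M k2) = {}" using M_disjoint assms by blast
  have e: "{u,w} \<union> set (M k1) \<union> set (M k2) = {u,w} \<union> (set (M k1) \<union> set (M k2))" by auto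
  have "card ({u,w} \<union> (set (M k1) \<union> set (M k2))) = card {u,w} + card (set (M k1) \<union> set (M k2))"
    using u_notin_M w_notin_M assms by (intro card_Un_disjoint) auto
  then have "card ({u,w} \<union> set (M k1) \<union> set (M k2)) = card {u,w} + card (set (M k1) \<union> set (M k2))"
    using e by simp
  also have "\<dots> = 2 + length (M k1) + length (M k2)"
    using d uw M_distinct assms by (simp add: card_Un_disjoint distinct_card)
  finally show ?thesis .
qed

lemma length_cycle_two_paths:
  assumes c: "is_cycle E c"
  shows "\<exists>k1 k2. k1 < K \<and> k2 < K \<and> k1 \<noteq> k2 \<and> set c = {u,w} \<union> set (M k1) \<union> set (M k2)
     \<and> length c = 2 + length (M k1) + length (M k2)"
proof -
  obtain k1 k2 where k: "k1 < K" "k2 < K" "k1 \<noteq> k2" "set c = {u,w} \<union> set (M k1) \<union> set (M k2)"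
    using cycle_is_two_paths[OF c] by blast
  have "length c = card (set c)" using c by (simp add: is_cycle_def distinct_card)
  then show ?thesis using k card_two_paths[OF k(1-3)] by auto
qed

lemma successively_inner: "k < K \<Longrightarrow> successively E (M k)"
  using successively_path[of k] by (simp add: successively_append_iff successively_Cons)

theorem two_paths_cycle:
  assumes k: "k1 < K" "k2 < K" "k1 \<noteq> k2"
  shows "is_cycle E (P k1 @ rev (M k2)) \<and> set (P k1 @ rev (M k2)) = {u,w} \<union> set (M k1) \<union> set (M k2)"
proof -
  let ?c = "P k1 @ rev (M k2)"
  have ne2: "M k2 \<noteq> []" using M_nonempty k by auto
  have d: "set (M k1) \<inter> set (M k2) = {}" using M_disjoint k by blast
  have dist: "distinct ?c" using distinct_path[OF k(1)] M_distinct[OF k(2)] d u_notin_M[OF k(2)] w_notin_M[OF k(2)] by auto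
  have s1: "successively E (P k1)" using successively_path k by auto
  have s2: "successively E (rev (M k2))"
    using successively_inner[OF k(2)] E_sym by (simp add: successively_mono)
  have sP2: "successively E (u # M k2 @ [w])" using successively_path k by auto
  have e1: "E (last (M k2)) w"
    using sP2 ne2 by (simp add: successively_append_iff successively_Cons)
  have e2: "E u (hd (M k2))"
    using sP2 ne2 by (cases "M k2") (auto simp: successively_Cons)
  have sc: "successively E ?c"
    apply (subst successively_append_iff)
    using s1 s2 E_sym[OF e1] ne2 by (simp add: hd_rev)
  have cl: "E (last ?c) (hd ?c)" using E_sym[OF e2] ne2 by (simp add: last_rev)
  have "3 \<le> length ?c" using ne2 by (cases "M k2") auto
  then show ?thesis using dist sc cl by (auto simp: is_cycle_iff)
qed

lemma finite_theta_vertices: "finite V" unfolding theta_vertices_def by auto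

lemma simple_theta: "simple_graph V E"
  unfolding simple_graph_def using finite_theta_vertices edge_in_V E_sym E_irrefl by blast

theorem girth_theta:
  assumes "\<forall>k1<K. \<forall>k2<K. k1 \<noteq> k2 \<longrightarrow> g \<le> 2 + length (M k1) + length (M k2)"
  shows "girth_at_least E g"
  unfolding girth_at_least_def
proof (intro allI impI)
  fix c assume cyc: "is_cycle E c"
  obtain k1 k2 where k: "k1 < K" "k2 < K" "k1 \<noteq> k2" "length c = 2 + length (M k1) + length (M k2)"
    using length_cycle_two_paths[OF cyc] by blast
  show "g \<le> length c" using assms k by auto
qed

lemma theta_cycle_length_bound:
  assumes short: "\<forall>k. 2 \<le> k \<and> k < K \<longrightarrow> length (M k) < length (M 0) \<and> length (M k) < length (M 1)"
    and c: "is_cycle E c"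
  shows "length c < 2 + length (M 0) + length (M 1)
    \<or> length c = 2 + length (M 0) + length (M 1) \<and> set c = {u, w} \<union> set (M 0) \<union> set (M 1)"
proof -
  obtain k1 k2 where k: "k1 < K" "k2 < K" "k1 \<noteq> k2" "set c = {u, w} \<union> set (M k1) \<union> set (M k2)"
    "length c = 2 + length (M k1) + length (M k2)"
    using length_cycle_two_paths[OF c] by blast
  have lt: "length (M k) < length (M 0)" "length (M k) < length (M 1)" if "2 \<le> k" "k < K" for k
    using short that by auto
  consider "k1 = 0 \<and> k2 = 1 \<or> k1 = 1 \<and> k2 = 0" | "2 \<le> k1 \<or> 2 \<le> k2" using k(3) by arith
  then show ?thesis
  proof cases
    case 1
    then show ?thesis using k(4,5) by auto
  next
    case 2
    then have "length c < 2 + length (M 0) + length (M 1)"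
      using lt[of k1] lt[of k2] k(1,2,3,5)
      by (cases "2 \<le> k1"; cases "2 \<le> k2") (auto simp: not_le less_2_cases_iff)
    then show ?thesis ..
  qed
qed

theorem cc_theta:
  assumes short: "\<forall>k. 2 \<le> k \<and> k < K \<longrightarrow> length (M k) < length (M 0) \<and> length (M k) < length (M 1)"
  shows "cc V E = 2 + length (M 0) + length (M 1)"
proof -
  let ?S = "{u, w} \<union> set (M 0) \<union> set (M 1)"
  let ?c0 = "P 0 @ rev (M 1)"
  have c0: "is_cycle E ?c0" "set ?c0 = ?S" using two_paths_cycle[of 0 1] two_le_K by auto
  have cum0: "cummerbund E ?c0"
    unfolding cummerbund_def using c0(1) theta_cycle_length_bound[OF short] by fastforce
  have "{v \<in> V. \<exists>c. cummerbund E c \<and> v \<in> set c} = ?S"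
  proof
    show "?S \<subseteq> {v \<in> V. \<exists>c. cummerbund E c \<and> v \<in> set c}"
      using c0 cum0 cycle_subset_V[OF c0(1)] by blast
    show "{v \<in> V. \<exists>c. cummerbund E c \<and> v \<in> set c} \<subseteq> ?S"
    proof
      fix v assume "v \<in> {v \<in> V. \<exists>c. cummerbund E c \<and> v \<in> set c}"
      then obtain c where cum: "cummerbund E c" "v \<in> set c" by blast
      then have cyc: "is_cycle E c" and "length ?c0 \<le> length c"
        using c0(1) unfolding cummerbund_def by blast+
      then show "v \<in> ?S" using theta_cycle_length_bound[OF short cyc] cum(2) by auto
    qed
  qed
  moreover have "card ?S = 2 + length (M 0) + length (M 1)" using card_two_paths[of 0 1] two_le_K by simp
  ultimately show ?thesis unfolding cc_def by simp
qed

lemma card_theta_vertices: "card V = 2 + (\<Sum>k<K. length (M k))"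
proof -
  have d: "{u,w} \<inter> (\<Union>k<K. set (M k)) = {}" using u_notin_M w_notin_M by auto
  have "card (\<Union>k<K. set (M k)) = (\<Sum>k<K. card (set (M k)))"
    using M_disjoint by (intro card_UN_disjoint) auto
  also have "\<dots> = (\<Sum>k<K. length (M k))" using M_distinct by (intro sum.cong) (auto simp: distinct_card)
  finally have "card (\<Union>k<K. set (M k)) = (\<Sum>k<K. length (M k))" .
  moreover have "card V = card {u,w} + card (\<Union>k<K. set (M k))"
    unfolding theta_vertices_def using d by (intro card_Un_disjoint) auto
  ultimately show ?thesis using uw by simp
qed

lemma path_rtranclp:
  assumes "successively E p" "set p \<subseteq> W" "p \<noteq> []"
  shows "(\<lambda>x y. x \<in> W \<and> y \<in> W \<and> E x y)\<^sup>*\<^sup>* (hd p) (last p)"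
proof -
  have "successively (\<lambda>x y. x \<in> W \<and> y \<in> W \<and> E x y) p"
    by (rule successively_mono[OF assms(1)]) (use assms(2) in auto)
  then show ?thesis using successively_imp_rtranclp assms(3) by fast
qed

lemma rtranclp_restrict_sym:
  assumes "(\<lambda>x y. x \<in> W \<and> y \<in> W \<and> E x y)\<^sup>*\<^sup>* a b"
  shows "(\<lambda>x y. x \<in> W \<and> y \<in> W \<and> E x y)\<^sup>*\<^sup>* b a"
  using assms
proof (induction rule: rtranclp_induct)
  case (step y z)
  have "(\<lambda>x y. x \<in> W \<and> y \<in> W \<and> E x y) z y" using step(2) E_sym by blast
  then show ?case using step(3) by (rule converse_rtranclp_into_rtranclp)
qed simp

lemma reach_hub:
  assumes S: "\<forall>a\<in>S. \<forall>b\<in>S. a = b" and x: "x \<in> V - S"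
  shows "\<exists>h \<in> {u, w} - S. (\<lambda>x y. x \<in> V - S \<and> y \<in> V - S \<and> E x y)\<^sup>*\<^sup>* x h"
proof (cases "x = u \<or> x = w")
  case True then show ?thesis using x by blast
next
  case False
  let ?W = "V - S"
  let ?R = "\<lambda>x y. x \<in> ?W \<and> y \<in> ?W \<and> E x y"
  obtain k where k: "k < K" "x \<in> set (M k)" using x False unfolding theta_vertices_def by auto
  obtain A B where AB: "M k = A @ x # B" using k(2) by (meson split_list)
  have dM: "distinct (M k)" using M_distinct k(1) by simp
  have sP: "successively E (u # A @ x # B @ [w])" using successively_path[OF k(1)] AB by simp
  have s1: "successively E (u # A @ [x])"
    using sP successively_append_iff[of E "u # A @ [x]" "B @ [w]"] by simp
  have s2: "successively E (x # B @ [w])"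
    using sP successively_append_iff[of E "u # A" "x # B @ [w]"] by simp
  have VP: "set (P k) \<subseteq> V" using set_path_subset k(1) by simp
  have disj12: "set (u # A @ [x]) \<inter> set (x # B @ [w]) = {x}"
    using dM AB u_notin_M[OF k(1)] w_notin_M[OF k(1)] uw by auto
  show ?thesis
  proof (cases "set (u # A @ [x]) \<subseteq> ?W")
    case True
    have e: "hd (u # A @ [x]) = u" "last (u # A @ [x]) = x" by simp_all
    have "?R\<^sup>*\<^sup>* u x" using path_rtranclp[OF s1 True list.simps(3), unfolded e] .
    then have "?R\<^sup>*\<^sup>* x u" by (rule rtranclp_restrict_sym)
    then show ?thesis using True by auto
  next
    case False
    then obtain s1' where s1': "s1' \<in> set (u # A @ [x])" "s1' \<in> S" using VP AB by auto
    have "y \<notin> S" if y: "y \<in> set (x # B @ [w])" for y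
    proof
      assume "y \<in> S"
      then have "y = s1'" using S s1' by blast
      then show False using disj12 y s1' x \<open>y \<in> S\<close> by auto
    qed
    then have sub: "set (x # B @ [w]) \<subseteq> ?W" using VP AB by auto
    have e: "hd (x # B @ [w]) = x" "last (x # B @ [w]) = w" by simp_all
    have "?R\<^sup>*\<^sup>* x w" using path_rtranclp[OF s2 sub list.simps(3), unfolded e] .
    then show ?thesis using sub by auto
  qed
qed

lemma hubs_connected:
  assumes S: "\<forall>a\<in>S. \<forall>b\<in>S. a = b" and h: "u \<notin> S" "w \<notin> S"
  shows "(\<lambda>x y. x \<in> V - S \<and> y \<in> V - S \<and> E x y)\<^sup>*\<^sup>* u w"
proof -
  obtain k where k: "k < K" "set (M k) \<inter> S = {}"
  proof (cases "set (M 0) \<inter> S = {}")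
    case True then show ?thesis using that[of 0] two_le_K by simp
  next
    case False
    then obtain s where s: "s \<in> set (M 0)" "s \<in> S" by blast
    have "set (M 1) \<inter> S = {}"
    proof (rule ccontr)
      assume "set (M 1) \<inter> S \<noteq> {}"
      then obtain s' where "s' \<in> set (M 1)" "s' \<in> S" by blast
      then have "s' = s" using S s by blast
      then show False using M_disjoint[of 0 1] two_le_K s \<open>s' \<in> set (M 1)\<close> by auto
    qed
    then show ?thesis using that[of 1] two_le_K by simp
  qed
  have sub: "set (P k) \<subseteq> V - S" using k h set_path_subset[OF k(1)] by auto
  have e: "hd (P k) = u" "last (P k) = w" by simp_all
  show ?thesis using path_rtranclp[OF successively_path[OF k(1)] sub list.simps(3), unfolded e] .
qed

lemma card_theta_vertices_gt_2: "card V > 2"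
proof -
  have "(\<Sum>k<K. length (M k)) \<ge> (\<Sum>k<K. (1::nat))"
    using M_nonempty by (intro sum_mono) (simp add: Suc_leI)
  then show ?thesis using card_theta_vertices two_le_K by simp
qed

theorem two_connected_theta: "two_connected V E"
  unfolding two_connected_def
proof (intro conjI allI impI)
  show gt2: "card V > 2" by (rule card_theta_vertices_gt_2)
  fix S assume S: "S \<subseteq> V \<and> card S < 2"
  have fS: "finite S" using S finite_theta_vertices finite_subset by blast
  then have S1: "\<forall>a\<in>S. \<forall>b\<in>S. a = b" using S card_le_Suc0_iff_eq[OF fS] by simp
  let ?R = "\<lambda>x y. x \<in> V - S \<and> y \<in> V - S \<and> E x y"
  have "V - S \<noteq> {}"
  proof
    assume "V - S = {}"
    then have "card V \<le> card S" using fS by (intro card_mono) auto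
    then show False using S gt2 by simp
  qed
  moreover have "?R\<^sup>*\<^sup>* a b" if ab: "a \<in> V - S" "b \<in> V - S" for a b
  proof -
    obtain h1 where h1: "h1 \<in> {u, w} - S" "?R\<^sup>*\<^sup>* a h1" using reach_hub[OF S1 ab(1)] by blast
    obtain h2 where h2: "h2 \<in> {u, w} - S" "?R\<^sup>*\<^sup>* b h2" using reach_hub[OF S1 ab(2)] by blast
    have "?R\<^sup>*\<^sup>* h1 h2"
    proof (cases "h1 = h2")
      case False
      then have "u \<notin> S" "w \<notin> S" "h1 = u \<and> h2 = w \<or> h1 = w \<and> h2 = u" using h1(1) h2(1) by auto
      then show ?thesis using hubs_connected[OF S1] rtranclp_restrict_sym by blast
    qed simp
    then show ?thesis using h1(2) rtranclp_restrict_sym[OF h2(2)] by (meson rtranclp_trans)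
  qed
  ultimately show "connected_on (V - S) E" unfolding connected_on_def by blast
qed
end

lemma theta_cc_values:
  assumes th: "theta M (0::nat) 1 K" and n: "card (theta_vertices M 0 1 K) = n"
    and g: "\<forall>k1<K. \<forall>k2<K. k1 \<noteq> k2 \<longrightarrow> g \<le> 2 + length (M k1) + length (M k2)"
    and short: "\<forall>k. 2 \<le> k \<and> k < K \<longrightarrow> length (M k) < length (M 0) \<and> length (M k) < length (M 1)"
  shows "2 + length (M 0) + length (M 1) \<in> cc_values n g"
proof -
  interpret theta M 0 1 K by (rule th)
  have "cc (theta_vertices M 0 1 K) (theta_edges M 0 1 K) = 2 + length (M 0) + length (M 1)"
    by (rule cc_theta[OF short])
  then show ?thesis
    using simple_theta two_connected_theta girth_theta[OF g] n unfolding cc_values_def by force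
qed

lemma sum_lessThan_shift_2: "(\<Sum>k<(m::nat) + 2. f k) = f 0 + f 1 + (\<Sum>k<m. f (k + 2))"
  by (simp add: numeral_2_eq_2 sum.lessThan_Suc_shift add.assoc del: sum.lessThan_Suc)

text \<open>Inner vertices of the paths of theta graphs with hubs 0 and 1; the name lists the numbers
  of inner vertices of path 0, of path 1 and of the further paths.\<close>

definition paths_2_2_1 :: "nat \<Rightarrow> nat list" where
  "paths_2_2_1 k = (if k = 0 then [2, 3] else if k = 1 then [4, 5] else [k + 4])"

definition paths_3_3_2 :: "nat \<Rightarrow> nat list" where
  "paths_3_3_2 k = (if k = 0 then [2, 3, 4] else if k = 1 then [5, 6, 7] else [2 * k + 4, 2 * k + 5])"

definition paths_3_3_2_1 :: "nat \<Rightarrow> nat \<Rightarrow> nat list" where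
  "paths_3_3_2_1 m k = (if k = m + 2 then [2 * m + 8] else paths_3_3_2 k)"

definition paths_3_4_2 :: "nat \<Rightarrow> nat list" where
  "paths_3_4_2 k = (if k = 0 then [2, 3, 4] else if k = 1 then [5, 6, 7, 8] else [2 * k + 5, 2 * k + 6])"

lemma cc_6_attained_girth_4: "6 \<le> n \<Longrightarrow> 6 \<in> cc_values n 4"
proof -
  assume "6 \<le> n"
  then have "n = (n - 6) + 6" by simp
  then obtain m where n: "n = m + 6" by blast
  have th: "theta paths_2_2_1 0 1 (m + 2)" by unfold_locales (auto simp: paths_2_2_1_def)
  have "(\<Sum>k<m + 2. length (paths_2_2_1 k)) = m + 4"
    by (subst sum_lessThan_shift_2) (simp add: paths_2_2_1_def)
  then have "card (theta_vertices paths_2_2_1 0 1 (m + 2)) = n"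
    using theta.card_theta_vertices[OF th] n by simp
  then have "2 + length (paths_2_2_1 0) + length (paths_2_2_1 1) \<in> cc_values n 4"
    by (intro theta_cc_values[OF th]) (auto simp: paths_2_2_1_def)
  then show ?thesis by (simp add: paths_2_2_1_def)
qed

lemma cc_8_attained_girth_6: "even n \<Longrightarrow> 8 \<le> n \<Longrightarrow> 8 \<in> cc_values n 6"
proof -
  assume "even n" "8 \<le> n"
  then have "n = 2 * ((n - 8) div 2) + 8" by presburger
  then obtain m where n: "n = 2 * m + 8" by blast
  have th: "theta paths_3_3_2 0 1 (m + 2)" by unfold_locales (auto simp: paths_3_3_2_def)
  have "(\<Sum>k<m + 2. length (paths_3_3_2 k)) = 2 * m + 6"
    by (subst sum_lessThan_shift_2) (simp add: paths_3_3_2_def)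
  then have "card (theta_vertices paths_3_3_2 0 1 (m + 2)) = n"
    using theta.card_theta_vertices[OF th] n by simp
  then have "2 + length (paths_3_3_2 0) + length (paths_3_3_2 1) \<in> cc_values n 6"
    by (intro theta_cc_values[OF th]) (auto simp: paths_3_3_2_def)
  then show ?thesis by (simp add: paths_3_3_2_def)
qed

lemma cc_8_attained_girth_5_odd: "odd n \<Longrightarrow> 9 \<le> n \<Longrightarrow> 8 \<in> cc_values n 5"
proof -
  assume "odd n" "9 \<le> n"
  then have "n = 2 * ((n - 9) div 2) + 9" by presburger
  then obtain m where n: "n = 2 * m + 9" by blast
  have th: "theta (paths_3_3_2_1 m) 0 1 (m + 3)"
    by unfold_locales (auto simp: paths_3_3_2_1_def paths_3_3_2_def)
  have "m + 3 = Suc (m + 2)" by simp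
  then have "(\<Sum>k<m + 3. length (paths_3_3_2_1 m k))
      = (\<Sum>k<m + 2. length (paths_3_3_2_1 m k)) + length (paths_3_3_2_1 m (m + 2))"
    by (simp only: sum.lessThan_Suc)
  also have "length (paths_3_3_2_1 m (m + 2)) = 1" by (simp add: paths_3_3_2_1_def)
  also have "(\<Sum>k<m + 2. length (paths_3_3_2_1 m k)) = 2 * m + 6"
    by (subst sum_lessThan_shift_2) (simp add: paths_3_3_2_1_def paths_3_3_2_def)
  finally have "card (theta_vertices (paths_3_3_2_1 m) 0 1 (m + 3)) = n"
    using theta.card_theta_vertices[OF th] n by simp
  then have "2 + length (paths_3_3_2_1 m 0) + length (paths_3_3_2_1 m 1) \<in> cc_values n 5"
    by (intro theta_cc_values[OF th]) (auto simp: paths_3_3_2_1_def paths_3_3_2_def)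
  then show ?thesis by (simp add: paths_3_3_2_1_def paths_3_3_2_def)
qed

lemma cc_9_attained_girth_6: "odd n \<Longrightarrow> 9 \<le> n \<Longrightarrow> 9 \<in> cc_values n 6"
proof -
  assume "odd n" "9 \<le> n"
  then have "n = 2 * ((n - 9) div 2) + 9" by presburger
  then obtain m where n: "n = 2 * m + 9" by blast
  have th: "theta paths_3_4_2 0 1 (m + 2)" by unfold_locales (auto simp: paths_3_4_2_def)
  have "(\<Sum>k<m + 2. length (paths_3_4_2 k)) = 2 * m + 7"
    by (subst sum_lessThan_shift_2) (simp add: paths_3_4_2_def)
  then have "card (theta_vertices paths_3_4_2 0 1 (m + 2)) = n"
    using theta.card_theta_vertices[OF th] n by simp
  then have "2 + length (paths_3_4_2 0) + length (paths_3_4_2 1) \<in> cc_values n 6"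
    by (intro theta_cc_values[OF th]) (auto simp: paths_3_4_2_def)
  then show ?thesis by (simp add: paths_3_4_2_def)
qed

section \<open>Ears of a cycle\<close>

definition crossing :: "nat \<Rightarrow> nat \<Rightarrow> nat \<Rightarrow> nat \<Rightarrow> bool" where
  "crossing a b c d \<longleftrightarrow> a < c \<and> c < b \<and> b < d \<or> c < a \<and> a < d \<and> d < b"

definition ear :: "('a \<Rightarrow> 'a \<Rightarrow> bool) \<Rightarrow> 'a list \<Rightarrow> nat \<Rightarrow> 'a list \<Rightarrow> nat \<Rightarrow> bool" where
  "ear E C i I j \<longleftrightarrow> i < j \<and> j < length C \<and> I \<noteq> [] \<and> distinct I \<and> set I \<inter> set C = {}
     \<and> successively E (C ! i # I @ [C ! j])"

lemma ear_edges: "ear E C i I j \<Longrightarrow> E (C ! i) (hd I) \<and> E (last I) (C ! j) \<and> successively E I"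
  unfolding ear_def by (cases I) (auto simp: successively_Cons successively_append_iff)

lemma heptagon_chords_cross:
  fixes a1 b1 a2 b2 a3 b3 :: nat
  assumes "b1 < 7" "b2 < 7" "b3 < 7"
    and "b1 = a1 + 3 \<or> b1 = a1 + 4" "b2 = a2 + 3 \<or> b2 = a2 + 4" "b3 = a3 + 3 \<or> b3 = a3 + 4"
    and "(a1, b1) \<noteq> (a2, b2)" "(a1, b1) \<noteq> (a3, b3)" "(a2, b2) \<noteq> (a3, b3)"
  shows "crossing a1 b1 a2 b2 \<or> crossing a1 b1 a3 b3 \<or> crossing a2 b2 a3 b3"
proof -
  txt \<open>The chords of a heptagon whose ends are three steps apart along it.\<close>
  let ?chords = "{(0, 3), (1, 4), (2, 5), (3, 6), (0, 4), (1, 5), (2, 6)} :: (nat \<times> nat) set"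
  have all: "crossing (fst c1) (snd c1) (fst c2) (snd c2) \<or> crossing (fst c1) (snd c1) (fst c3) (snd c3)
      \<or> crossing (fst c2) (snd c2) (fst c3) (snd c3)"
    if "c1 \<in> ?chords" "c2 \<in> ?chords" "c3 \<in> ?chords" "c1 \<noteq> c2" "c1 \<noteq> c3" "c2 \<noteq> c3" for c1 c2 c3
    using that unfolding crossing_def by (elim insertE emptyE) simp_all
  have mem: "(a, b) \<in> ?chords" if "b < 7" "b = a + 3 \<or> b = a + 4" for a b
  proof -
    have "a < 4" using that by linarith
    then have "a = 0 \<or> a = 1 \<or> a = 2 \<or> a = 3" by arith
    then show ?thesis using that by (elim disjE) simp_all
  qed
  show ?thesis
    using all[OF mem[OF assms(1,4)] mem[OF assms(2,5)] mem[OF assms(3,6)] assms(7-9)] by simp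
qed

definition fan :: "('a \<Rightarrow> 'a \<Rightarrow> bool) \<Rightarrow> 'a list \<Rightarrow> 'a \<Rightarrow> 'a list \<Rightarrow> 'a list \<Rightarrow> bool" where
  "fan E C v P Q \<longleftrightarrow> P \<noteq> [] \<and> Q \<noteq> [] \<and> hd P = v \<and> hd Q = v \<and> distinct P \<and> distinct Q
     \<and> successively E P \<and> successively E Q \<and> last P \<in> set C \<and> last Q \<in> set C \<and> last P \<noteq> last Q
     \<and> set P \<inter> set Q = {v} \<and> (\<forall>x\<in>set (butlast P). x \<notin> set C) \<and> (\<forall>x\<in>set (butlast Q). x \<notin> set C)"

lemma fan_sym: "fan E C v P Q \<Longrightarrow> fan E C v Q P"
  unfolding fan_def by auto

lemma set_eq_insert_last_butlast: "R \<noteq> [] \<Longrightarrow> set R = insert (last R) (set (butlast R))"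
  by (induction R) auto

lemma set_butlast_append_subset:
  "R \<noteq> [] \<Longrightarrow> set (butlast (R @ B)) \<subseteq> set (butlast R) \<union> set (butlast (last R # B))"
  by (cases B rule: rev_cases) (auto simp: butlast_append set_eq_insert_last_butlast)

lemma successively_within_imp_subset:
  "successively (\<lambda>x y. x \<in> W \<and> y \<in> W \<and> R x y) p \<Longrightarrow> p \<noteq> [] \<Longrightarrow> hd p \<in> W \<Longrightarrow> set p \<subseteq> W"
proof (induction p)
  case (Cons a p) then show ?case by (cases p) (auto simp: successively_Cons)
qed simp

locale sgraph =
  fixes V :: "'a set" and E :: "'a \<Rightarrow> 'a \<Rightarrow> bool"
  assumes simple: "simple_graph V E"
begin

lemma E_sym: "E x y \<Longrightarrow> E y x"
  using simple unfolding simple_graph_def by blast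

lemma E_in_V: "E x y \<Longrightarrow> x \<in> V \<and> y \<in> V"
  using simple unfolding simple_graph_def by blast

lemma E_irrefl: "\<not> E x x"
  using simple unfolding simple_graph_def by blast

lemma finite_V: "finite V"
  using simple unfolding simple_graph_def by blast

lemma cycle_in_V:
  assumes "is_cycle E C" shows "set C \<subseteq> V"
proof
  fix x assume "x \<in> set C"
  then obtain i where "i < length C" "C ! i = x" by (metis in_set_conv_nth)
  then show "x \<in> V" using assms E_in_V unfolding is_cycle_def by blast
qed

lemma successively_converse_iff: "successively (\<lambda>x y. E y x) xs \<longleftrightarrow> successively E xs"
  by (auto intro: E_sym elim: successively_mono)

lemma ear_split_cycles:
  assumes C: "is_cycle E C" and I: "ear E C i I j"
  shows "is_cycle E (arc C 0 i @ I @ arc C j (length C - 1))"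
    and "is_cycle E (arc C i j @ rev I)"
proof -
  let ?L = "length C"
  have ij: "i < j" "j < ?L" and dI: "distinct I" and IC: "set I \<inter> set C = {}" and Ine: "I \<noteq> []"
    using I unfolding ear_def by auto
  have dC: "distinct C" using C by (simp add: is_cycle_def)
  have e: "E (C ! i) (hd I)" "E (last I) (C ! j)" "successively E I" using ear_edges[OF I] by auto
  have sub: "set (arc C 0 i) \<subseteq> set C" "set (arc C j (?L - 1)) \<subseteq> set C" "set (arc C i j) \<subseteq> set C"
    using set_arc_subset[of i C 0] set_arc_subset[of "?L - 1" C j] set_arc_subset[of j C i] ij by auto
  have disj: "set (arc C 0 i) \<inter> set (arc C j (?L - 1)) = {}" using ij dC by (intro arcs_disjoint) auto
  have dist: "distinct (arc C 0 i)" "distinct (arc C j (?L - 1))" "distinct (arc C i j)"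
    using ij dC by (auto intro: distinct_arc)
  have succ: "successively E (arc C 0 i)" "successively E (arc C j (?L - 1))" "successively E (arc C i j)"
    using ij C by (auto intro: successively_arc)
  show "is_cycle E (arc C 0 i @ I @ arc C j (?L - 1))"
    unfolding is_cycle_iff
  proof (intro conjI)
    show "3 \<le> length (arc C 0 i @ I @ arc C j (?L - 1))" using ij Ine by (cases I) auto
    show "distinct (arc C 0 i @ I @ arc C j (?L - 1))" using dist dI disj sub IC by auto
    show "successively E (arc C 0 i @ I @ arc C j (?L - 1))"
      using succ e Ine ij by (simp add: successively_append_iff arc_nonempty)
    show "E (last (arc C 0 i @ I @ arc C j (?L - 1))) (hd (arc C 0 i @ I @ arc C j (?L - 1)))"
      using cycle_closing_edge[OF C] ij by (simp add: arc_nonempty)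
  qed
  show "is_cycle E (arc C i j @ rev I)"
    unfolding is_cycle_iff
  proof (intro conjI)
    show "3 \<le> length (arc C i j @ rev I)" using ij Ine by (cases I) auto
    show "distinct (arc C i j @ rev I)" using dist dI sub IC by auto
    show "successively E (arc C i j @ rev I)"
      using succ e Ine ij by (simp add: successively_append_iff arc_nonempty successively_converse_iff E_sym hd_rev)
    show "E (last (arc C i j @ rev I)) (hd (arc C i j @ rev I))"
      using e Ine ij by (simp add: arc_nonempty last_rev E_sym)
  qed
qed

lemma ear_of_path:
  assumes "i \<noteq> j" "i < length C" "j < length C" "I \<noteq> []" "distinct I" "set I \<inter> set C = {}"
    and "successively E (C ! i # I @ [C ! j])"
  shows "ear E C (min i j) (if i < j then I else rev I) (max i j)"
proof (cases "i < j")
  case False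
  have "rev (C ! i # I @ [C ! j]) = C ! j # rev I @ [C ! i]" by simp
  then have "successively E (C ! j # rev I @ [C ! i])"
    using assms(7) by (metis successively_converse_iff successively_rev)
  then show ?thesis using False assms unfolding ear_def by auto
qed (use assms in \<open>auto simp: ear_def\<close>)

lemma parallel_ears_cycle:
  assumes C: "is_cycle E C" and P: "ear E C a P b" and Q: "ear E C a Q b" and PQ: "set P \<inter> set Q = {}"
  shows "is_cycle E (C ! a # P @ C ! b # rev Q)"
  unfolding is_cycle_iff
proof (intro conjI)
  have ab: "a < b" "b < length C" and PC: "set P \<inter> set C = {}" and QC: "set Q \<inter> set C = {}"
    and d: "distinct P" "distinct Q" and ne: "P \<noteq> []" "Q \<noteq> []"
    using P Q unfolding ear_def by auto
  have "C ! a \<noteq> C ! b" using C ab by (auto simp: is_cycle_def nth_eq_iff_index_eq)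
  moreover have "C ! a \<in> set C" "C ! b \<in> set C" using ab by auto
  ultimately show "distinct (C ! a # P @ C ! b # rev Q)" using PC QC PQ d by auto
  show "3 \<le> length (C ! a # P @ C ! b # rev Q)" using ne by (cases P) auto
  have "successively E (C ! a # P @ [C ! b])" using P unfolding ear_def by blast
  then show "successively E (C ! a # P @ C ! b # rev Q)"
    using ear_edges[OF Q] ne
    by (simp add: successively_append_iff successively_Cons successively_converse_iff E_sym hd_rev)
  show "E (last (C ! a # P @ C ! b # rev Q)) (hd (C ! a # P @ C ! b # rev Q))"
    using ear_edges[OF Q] ne by (simp add: last_rev E_sym)
qed

context
  fixes C P Q :: "'a list" and a b c d :: nat
  assumes C: "is_cycle E C" and P: "ear E C a P b" and Q: "ear E C c Q d"
    and PQ: "set P \<inter> set Q = {}" and cross: "a < c" "c < b" "b < d"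
begin

lemma crossing_ears_outer_cycle:
  "is_cycle E (arc C 0 a @ P @ rev (arc C c b) @ Q @ arc C d (length C - 1))"
  unfolding is_cycle_iff
proof (intro conjI)
  let ?D = "arc C 0 a @ P @ rev (arc C c b) @ Q @ arc C d (length C - 1)"
  have dL: "d < length C" and PC: "set P \<inter> set C = {}" and QC: "set Q \<inter> set C = {}"
    and dPQ: "distinct P" "distinct Q" and ne: "P \<noteq> []" "Q \<noteq> []"
    using P Q unfolding ear_def by auto
  have dC: "distinct C" using C by (simp add: is_cycle_def)
  have sub: "set (arc C 0 a) \<subseteq> set C" "set (arc C c b) \<subseteq> set C" "set (arc C d (length C - 1)) \<subseteq> set C"
    using cross dL by (auto intro!: set_arc_subset)
  have disj: "set (arc C 0 a) \<inter> set (arc C c b) = {}" "set (arc C 0 a) \<inter> set (arc C d (length C - 1)) = {}"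
    "set (arc C c b) \<inter> set (arc C d (length C - 1)) = {}"
    using cross dL by (simp_all add: arcs_disjoint[OF dC])
  show "distinct ?D"
    using cross dL dC dPQ disj sub PC QC PQ by (auto intro!: distinct_arc)
  show "successively E ?D"
    using cross dL C ear_edges[OF P] ear_edges[OF Q] ne
    by (simp add: successively_arc successively_append_iff successively_converse_iff arc_nonempty
        hd_rev last_rev E_sym)
  show "E (last ?D) (hd ?D)" using cycle_closing_edge[OF C] cross dL by (simp add: arc_nonempty)
  show "3 \<le> length ?D" using ne cross by (cases P) auto
qed

lemma crossing_ears_inner_cycle: "is_cycle E (arc C a c @ Q @ rev (arc C b d) @ rev P)"
  unfolding is_cycle_iff
proof (intro conjI)
  let ?D = "arc C a c @ Q @ rev (arc C b d) @ rev P"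
  have dL: "d < length C" and PC: "set P \<inter> set C = {}" and QC: "set Q \<inter> set C = {}"
    and dPQ: "distinct P" "distinct Q" and ne: "P \<noteq> []" "Q \<noteq> []"
    using P Q unfolding ear_def by auto
  have dC: "distinct C" using C by (simp add: is_cycle_def)
  have sub: "set (arc C a c) \<subseteq> set C" "set (arc C b d) \<subseteq> set C"
    using cross dL by (auto intro!: set_arc_subset)
  have disj: "set (arc C a c) \<inter> set (arc C b d) = {}" using cross dL by (simp add: arcs_disjoint[OF dC])
  show "distinct ?D"
    using cross dL dC dPQ disj sub PC QC PQ by (auto intro!: distinct_arc)
  show "successively E ?D"
    using cross dL C ear_edges[OF P] ear_edges[OF Q] ne
    by (simp add: successively_arc successively_append_iff successively_converse_iff arc_nonempty
        hd_rev last_rev E_sym)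
  show "E (last ?D) (hd ?D)" using ear_edges[OF P] ne cross by (simp add: arc_nonempty last_rev E_sym)
  show "3 \<le> length ?D" using ne cross by (cases P) auto
qed

text \<open>Together the two cycles pass twice through each vertex of the ears and through their four
  ends, and once through every other vertex of \<open>C\<close>; so one of them is long.\<close>

lemma crossing_ears_cycle:
  "\<exists>D. is_cycle E D \<and> set P \<union> set Q \<subseteq> set D \<and> 2 * (length P + length Q) + length C + 4 \<le> 2 * length D"
proof -
  let ?D1 = "arc C 0 a @ P @ rev (arc C c b) @ Q @ arc C d (length C - 1)"
  let ?D2 = "arc C a c @ Q @ rev (arc C b d) @ rev P"
  have "d < length C" using Q unfolding ear_def by auto
  then have "length ?D1 + length ?D2 = 2 * (length P + length Q) + length C + 4" using cross by simp
  moreover have "set P \<union> set Q \<subseteq> set ?D1" "set P \<union> set Q \<subseteq> set ?D2" by auto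
  ultimately show ?thesis using crossing_ears_outer_cycle crossing_ears_inner_cycle
    by (metis add_le_mono le_cases mult_2)
qed

end

end

section \<open>Ears in 2-connected graphs\<close>

locale biconnected = sgraph +
  assumes biconnected: "two_connected V E"
begin

lemma card_V_gt_2: "card V > 2"
  using biconnected unfolding two_connected_def by blast

lemma connected_minus:
  assumes "S \<subseteq> V" "card S < 2" shows "connected_on (V - S) E"
  using biconnected assms unfolding two_connected_def by blast

lemma path_avoiding:
  assumes "S \<subseteq> V" "card S < 2" "a \<in> V - S" "b \<in> V - S"
  shows "\<exists>p. p \<noteq> [] \<and> distinct p \<and> hd p = a \<and> last p = b \<and> set p \<subseteq> V - S \<and> successively E p"
proof -
  let ?R = "\<lambda>x y. x \<in> V - S \<and> y \<in> V - S \<and> E x y"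
  have "?R\<^sup>*\<^sup>* a b" using connected_minus[OF assms(1,2)] assms(3,4) unfolding connected_on_def by blast
  then obtain p where p: "p \<noteq> []" "hd p = a" "last p = b" "successively ?R p" using rtranclp_imp_walk[of ?R a b] by blast
  obtain q where q: "q \<noteq> []" "distinct q" "hd q = a" "last q = b" "set q \<subseteq> set p" "successively ?R q"
    using walk_imp_path[OF p(4) p(1)] p by auto
  have "set q \<subseteq> V - S" using successively_within_imp_subset[OF q(6) q(1)] q(3) assms(3) by blast
  moreover have "successively E q" by (rule successively_mono[OF q(6)]) auto
  ultimately show ?thesis using q by blast
qed

lemma fan_at_cycle_neighbour:
  assumes C: "is_cycle E C" and v: "v \<in> V" "v \<notin> set C" and u: "u \<in> set C" "E v u"
  shows "\<exists>P Q. fan E C v P Q"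
proof -
  have L: "3 \<le> length C" "distinct C" using C by (auto simp: is_cycle_def)
  have "\<exists>b\<in>set C. b \<noteq> u"
  proof (rule ccontr)
    assume "\<not> ?thesis"
    then have "set C \<subseteq> {u}" by auto
    then have "card (set C) \<le> 1" using card_mono[of "{u}" "set C"] by simp
    then show False using L distinct_card[of C] by simp
  qed
  then obtain b where b: "b \<in> set C" "b \<noteq> u" by blast
  have bV: "b \<in> V" using cycle_in_V[OF C] b by blast
  have uV: "u \<in> V" using cycle_in_V[OF C] u by blast
  have vu: "v \<noteq> u" using v u by blast
  obtain p where p: "p \<noteq> []" "distinct p" "hd p = v" "last p = b" "set p \<subseteq> V - {u}" "successively E p"
    using path_avoiding[of "{u}" v b] uV v vu bV b by auto
  obtain q where q: "q \<noteq> []" "hd q = v" "last q \<in> set C" "\<forall>x\<in>set (butlast q). x \<notin> set C"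
     "set q \<subseteq> set p" "successively E q" "distinct q"
    using walk_prefix_until[OF p(6) p(1), of "set C"] p b by auto
  have uq: "u \<notin> set q" using q(5) p(5) by auto
  have vq: "v \<in> set q" using q(1,2) by (cases q) auto
  have "fan E C v [v, u] q"
    unfolding fan_def using q uq vq vu u v by auto
  then show ?thesis by blast
qed

lemma fan_at_fan_vertex:
  assumes F: "fan E C u P1 P2" and e: "E v u" and vP: "v \<in> set P1" and vC: "v \<notin> set C"
  shows "\<exists>P Q. fan E C v P Q"
proof -
  have vu: "v \<noteq> u" using e E_irrefl by blast
  obtain A B where AB: "P1 = A @ v # B" using vP by (meson split_list)
  have F1: "P1 \<noteq> []" "hd P1 = u" "distinct P1" "successively E P1" "last P1 \<in> set C"
    "P2 \<noteq> []" "hd P2 = u" "distinct P2" "successively E P2" "last P2 \<in> set C" "last P1 \<noteq> last P2"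
    "set P1 \<inter> set P2 = {u}" "\<forall>x\<in>set (butlast P1). x \<notin> set C" "\<forall>x\<in>set (butlast P2). x \<notin> set C"
    using F unfolding fan_def by auto
  have Ane: "A \<noteq> []" using AB F1(2) vu by auto
  have uA: "u \<in> set A" using AB F1(2) Ane by (cases A) auto
  have dAB: "v \<notin> set A" "v \<notin> set B" "set A \<inter> set B = {}" using F1(3) AB by auto
  have uB: "u \<notin> set B" using uA dAB by auto
  have Bne: "B \<noteq> []" using AB F1(5) vC by auto
  have lB: "last (v # B) = last P1" using AB Bne by simp
  have vP2: "v \<notin> set P2" using F1(12) vP vu by auto
  have BP2: "set B \<inter> set P2 = {}" using F1(12) AB uB by auto
  have sB: "successively E (v # B)" using F1(4) AB by (simp add: successively_append_iff)
  have hP2: "hd P2 = u" using F1 by simp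
  have sP2: "successively E (v # P2)" using F1(9) F1(6) hP2 e by (cases P2) (auto simp: successively_Cons)
  have bl1: "butlast P1 = A @ v # butlast B" using AB Bne by (simp add: butlast_append)
  have "\<forall>x\<in>set (butlast (v # B)). x \<notin> set C" using F1(13) bl1 vC Bne by (cases B) auto
  moreover have "\<forall>x\<in>set (butlast (v # P2)). x \<notin> set C" using F1(14) vC F1(6) by (cases P2) auto
  moreover have "last (v # P2) = last P2" using F1(6) by simp
  ultimately have "fan E C v (v # B) (v # P2)"
    unfolding fan_def using lB F1 dAB vP2 BP2 sB sP2 AB by auto
  then show ?thesis by blast
qed

lemma path_splice:
  assumes P: "P = A @ x # B" "distinct P" "successively E P"
    and R: "R \<noteq> []" "last R = x" "distinct R" "successively E R" "set (butlast R) \<inter> set P = {}"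
  shows "distinct (R @ B)" "successively E (R @ B)" "last (R @ B) = last P"
    and "set (butlast (R @ B)) \<subseteq> set (butlast R) \<union> set (butlast P)"
proof -
  have "set R = insert x (set (butlast R))" using R(1,2) set_eq_insert_last_butlast by metis
  then show "distinct (R @ B)" using P(1,2) R(3,5) by auto
  have "successively E (x # B)" using P(1,3) by (simp add: successively_append_iff)
  then show "successively E (R @ B)" using R(1,2,4) by (cases B) (auto simp: successively_append_iff successively_Cons)
  show "last (R @ B) = last P" using P(1) R(1,2) by (cases "B = []") auto
  have "set (butlast (x # B)) \<subseteq> set (butlast P)" using P(1) by (simp add: butlast_append)
  then show "set (butlast (R @ B)) \<subseteq> set (butlast R) \<union> set (butlast P)"
    using set_butlast_append_subset[OF R(1)] R(2) by blast
qed

lemma fan_prepend: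
  assumes F: "fan E C u P1 P2" and e: "E v u" and v: "v \<notin> set P2" "v \<notin> set C"
  shows "distinct (v # P2)" "successively E (v # P2)" "last (v # P2) = last P2"
    and "\<forall>y\<in>set (butlast (v # P2)). y \<notin> set C"
  using F e v unfolding fan_def by (cases P2; auto simp: successively_Cons)+

lemma fan_rerouted_to_fan:
  assumes F: "fan E C u P1 P2" and e: "E v u" and vn: "v \<notin> set P1" "v \<notin> set P2" "v \<notin> set C"
    and R: "R \<noteq> []" "hd R = v" "distinct R" "successively E R" "u \<notin> set R"
       "\<forall>y\<in>set (butlast R). y \<notin> set P1 \<and> y \<notin> set P2 \<and> y \<notin> set C" "last R \<in> set P1"
  shows "\<exists>P Q. fan E C v P Q"
proof -
  let ?x = "last R"
  have F1: "P1 \<noteq> []" "hd P1 = u" "distinct P1" "successively E P1" "last P1 \<in> set C"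
    "last P2 \<in> set C" "last P1 \<noteq> last P2"
    "set P1 \<inter> set P2 = {u}" "\<forall>x\<in>set (butlast P1). x \<notin> set C"
    using F unfolding fan_def by auto
  obtain A B where AB: "P1 = A @ ?x # B" using R(7) by (meson split_list)
  have "?x \<noteq> u" using R(1,5) by auto
  then have "u \<in> set A" using AB F1(2) by (cases A) auto
  then have uB: "u \<notin> set B" using F1(3) AB by auto
  have "set (butlast R) \<inter> set P1 = {}" using R(6) by auto
  note splice = path_splice[OF AB F1(3,4) R(1) refl R(3,4) this]
  have "set R \<inter> set P2 = {}"
    using R(6) F1(8) R(7) \<open>?x \<noteq> u\<close> set_eq_insert_last_butlast[OF R(1)] by auto
  moreover have "set B \<inter> set P2 = {}" using F1(8) AB uB by auto
  moreover have "v \<in> set R" using R(1,2) by (cases R) auto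
  ultimately have "set (R @ B) \<inter> set (v # P2) = {v}" using vn(2) by auto
  moreover have "\<forall>y\<in>set (butlast (R @ B)). y \<notin> set C" using splice(4) R(6) F1(9) by blast
  ultimately have "fan E C v (R @ B) (v # P2)"
    using splice(1-3) fan_prepend[OF F e vn(2,3)] R(1,2) F1(5,6,7) unfolding fan_def by auto
  then show ?thesis by blast
qed

lemma fan_rerouted_to_cycle:
  assumes F: "fan E C u P1 P2" and e: "E v u" and vn: "v \<notin> set P1" "v \<notin> set C"
    and R: "R \<noteq> []" "hd R = v" "distinct R" "successively E R"
       "\<forall>y\<in>set (butlast R). y \<notin> set P1 \<and> y \<notin> set C" "last R \<in> set C" "last R \<notin> set P1"
  shows "\<exists>P Q. fan E C v P Q"
proof -
  have F1: "P1 \<noteq> []" "hd P1 = u" "distinct P1" "successively E P1" "last P1 \<in> set C"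
    "\<forall>x\<in>set (butlast P1). x \<notin> set C"
    using F unfolding fan_def by auto
  have Rdec: "R = butlast R @ [last R]" using R(1) by simp
  have RP1: "set R \<inter> set P1 = {}"
  proof -
    have "set (butlast R) \<inter> set P1 = {}" using R(5) by auto
    then show ?thesis using R(7) set_eq_insert_last_butlast[OF R(1)] by auto
  qed
  have vR: "v \<in> set R" using R(1,2) by (cases R) auto
  have sP: "successively E (v # P1)" using F1 e by (cases P1) (auto simp: successively_Cons)
  have "last (v # P1) \<noteq> last R" using F1(1) R(7) by (metis last_ConsR last_in_set)
  moreover have "set (v # P1) \<inter> set R = {v}" using RP1 vR by auto
  moreover have "\<forall>y\<in>set (butlast (v # P1)). y \<notin> set C" using F1(6) vn F1(1) by (cases P1) auto
  moreover have "\<forall>y\<in>set (butlast R). y \<notin> set C" using R(5) by auto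
  ultimately have "fan E C v (v # P1) R"
    unfolding fan_def using F1 R vn sP by auto
  then show ?thesis by blast
qed

lemma fan_at_fan_neighbour:
  assumes C: "is_cycle E C" and F: "fan E C u P1 P2" and e: "E v u" and u: "u \<notin> set C"
    and v: "v \<in> V" "v \<notin> set C"
  shows "\<exists>P Q. fan E C v P Q"
proof -
  consider "v \<in> set P1" | "v \<in> set P2" | "v \<notin> set P1" "v \<notin> set P2" by blast
  then show ?thesis
  proof cases
    case 1 then show ?thesis using fan_at_fan_vertex[OF F e _ v(2)] by simp
  next
    case 2 then show ?thesis using fan_at_fan_vertex[OF fan_sym[OF F] e _ v(2)] by simp
  next
    case 3
    have uV: "u \<in> V" and vu: "v \<noteq> u" using e E_in_V E_irrefl by blast+
    have hC: "hd C \<in> set C" using C by (cases C) (auto simp: is_cycle_def)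
    then have "hd C \<in> V - {u}" using cycle_in_V[OF C] u by auto
    then obtain q where q: "q \<noteq> []" "hd q = v" "last q = hd C" "set q \<subseteq> V - {u}" "successively E q"
      "distinct q"
      using path_avoiding[of "{u}" v "hd C"] uV v vu by auto
    let ?S = "set P1 \<union> set P2 \<union> set C"
    obtain R where R: "R \<noteq> []" "hd R = v" "last R \<in> ?S" "\<forall>x\<in>set (butlast R). x \<notin> ?S"
      "set R \<subseteq> set q" "successively E R" "distinct R"
      using walk_prefix_until[OF q(5) q(1), of ?S] q hC by auto
    have uR: "u \<notin> set R" using R(5) q(4) by auto
    consider "last R \<in> set P1" | "last R \<in> set P2" | "last R \<in> set C" "last R \<notin> set P1"
      using R(3) by blast
    then show ?thesis
    proof cases
      case 1
      show ?thesis by (rule fan_rerouted_to_fan[OF F e 3 v(2) R(1,2,7,6) uR _ 1]) (use R(4) in auto)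
    next
      case 2
      show ?thesis
        by (rule fan_rerouted_to_fan[OF fan_sym[OF F] e 3(2,1) v(2) R(1,2,7,6) uR _ 2]) (use R(4) in auto)
    next
      case 3
      show ?thesis by (rule fan_rerouted_to_cycle[OF F e _ v(2) R(1,2,7,6) _ 3]) (use R(4) \<open>v \<notin> set P1\<close> in auto)
    qed
  qed
qed

lemma fan_along_walk:
  assumes C: "is_cycle E C"
  shows "p \<noteq> [] \<Longrightarrow> successively E p \<Longrightarrow> last p \<in> set C \<Longrightarrow> hd p \<notin> set C \<Longrightarrow> hd p \<in> V
     \<Longrightarrow> \<exists>P Q. fan E C (hd p) P Q"
proof (induction p)
  case (Cons v p)
  then have p: "p \<noteq> []" "E v (hd p)" "successively E p" by (auto simp: successively_Cons)
  then have "hd p \<in> V" using E_in_V by blast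
  show ?case
  proof (cases "hd p \<in> set C")
    case True
    then show ?thesis using fan_at_cycle_neighbour[OF C _ _ True p(2)] Cons.prems by simp
  next
    case False
    then obtain P1 P2 where "fan E C (hd p) P1 P2"
      using Cons.IH[OF p(1,3)] Cons.prems(3) p(1) \<open>hd p \<in> V\<close> by auto
    then show ?thesis using fan_at_fan_neighbour[OF C _ p(2) False] Cons.prems by simp
  qed
qed simp

theorem fan_exists:
  assumes C: "is_cycle E C" and v: "v \<in> V" "v \<notin> set C"
  shows "\<exists>P Q. fan E C v P Q"
proof -
  have L: "3 \<le> length C" using C by (auto simp: is_cycle_def)
  then have hC: "hd C \<in> set C" by (cases C) auto
  have hCV: "hd C \<in> V" using hC cycle_in_V[OF C] by auto
  obtain q where q: "q \<noteq> []" "distinct q" "hd q = v" "last q = hd C" "set q \<subseteq> V - {}" "successively E q"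
    using path_avoiding[of "{}" v "hd C"] v hCV by auto
  show ?thesis using fan_along_walk[OF C q(1) q(6)] q hC v by auto
qed

lemma ear_from_fan:
  assumes F: "fan E C v P Q" and vC: "v \<notin> set C"
  shows "\<exists>a b I. a \<in> set C \<and> b \<in> set C \<and> a \<noteq> b \<and> I \<noteq> [] \<and> v \<in> set I \<and> set I \<inter> set C = {}
     \<and> distinct (a # I @ [b]) \<and> successively E (a # I @ [b])"
proof -
  have F1: "P \<noteq> []" "hd P = v" "distinct P" "successively E P" "last P \<in> set C"
    "Q \<noteq> []" "hd Q = v" "distinct Q" "successively E Q" "last Q \<in> set C" "last P \<noteq> last Q"
    "set P \<inter> set Q = {v}" "\<forall>x\<in>set (butlast P). x \<notin> set C" "\<forall>x\<in>set (butlast Q). x \<notin> set C"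
    using F unfolding fan_def by auto
  let ?a = "last P" and ?b = "last Q" and ?I = "rev (butlast P) @ tl (butlast Q)"
  have Pd: "P = butlast P @ [?a]" "Q = butlast Q @ [?b]" using F1(1,6) by simp_all
  have Pb: "butlast P \<noteq> []" using F1(1,2,5) vC by (cases P rule: rev_cases) auto
  then have "hd (butlast P) = v" using F1(2) Pd(1) by (metis hd_append2)
  have Qb: "butlast Q \<noteq> []" using F1(6,7,10) vC by (cases Q rule: rev_cases) auto
  have "rev P = ?a # rev (butlast P)" using Pd(1) by (metis rev_eq_Cons_iff rev_rev_ident)
  moreover have "tl Q = tl (butlast Q) @ [?b]" using Pd(2) Qb by (metis tl_append2)
  ultimately have W: "rev P @ tl Q = ?a # ?I @ [?b]" by simp
  have "v \<notin> set (tl Q)" using F1(6,7,8) by (cases Q) auto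
  moreover have "set (tl Q) \<subseteq> set Q" by (cases Q) auto
  ultimately have "set P \<inter> set (tl Q) = {}" using F1(12) by auto
  then have "distinct (rev P @ tl Q)" using F1(3,8) by (simp add: distinct_tl)
  moreover have "successively E (rev P @ tl Q)"
  proof -
    have "tl Q \<noteq> []" using Qb F1(6) by (cases Q rule: rev_cases) auto
    then have "E v (hd (tl Q))" "successively E (tl Q)"
      using F1(6,7,9) by (cases Q; auto simp: successively_Cons)+
    then show ?thesis
      using F1(1,2,4) by (simp add: successively_append_iff successively_converse_iff last_rev)
  qed
  moreover have "v \<in> set ?I" using Pb \<open>hd (butlast P) = v\<close> by (cases "butlast P") auto
  moreover have "set ?I \<inter> set C = {}" using F1(13,14) Qb by (auto dest: list.set_sel(2))
  moreover have "?I \<noteq> []" using Pb by simp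
  ultimately show ?thesis using W F1(5,10,11) by (metis (no_types, lifting))
qed

lemma ear_through_vertex:
  assumes C: "is_cycle E C" and v: "v \<in> V" "v \<notin> set C"
  shows "\<exists>i I j. ear E C i I j \<and> v \<in> set I"
proof -
  obtain P Q where "fan E C v P Q" using fan_exists[OF C v] by blast
  then obtain a b I where e: "a \<in> set C" "b \<in> set C" "a \<noteq> b" "I \<noteq> []" "v \<in> set I"
    "set I \<inter> set C = {}" "distinct (a # I @ [b])" "successively E (a # I @ [b])"
    using ear_from_fan v(2) by blast
  obtain i j where ij: "i < length C" "C ! i = a" "j < length C" "C ! j = b"
    using e(1,2) by (metis in_set_conv_nth)
  have "i \<noteq> j" using ij e(3) by auto
  then have "ear E C (min i j) (if i < j then I else rev I) (max i j)"
    using ear_of_path ij e by auto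
  then show ?thesis using e(5) by (metis set_rev)
qed

lemma neighbour_avoiding:
  assumes "S \<subseteq> V" "card S < 2" "a \<in> V - S" "b \<in> V - S" "a \<noteq> b"
  shows "\<exists>y. y \<in> V - S \<and> E a y"
proof -
  obtain p where p: "p \<noteq> []" "distinct p" "hd p = a" "last p = b" "set p \<subseteq> V - S" "successively E p"
    using path_avoiding[OF assms(1-4)] by blast
  obtain r where r: "p = a # r" using p(1,3) by (cases p) auto
  have "r \<noteq> []" using r p(4) assms(5) by auto
  then have "E a (hd r)" "hd r \<in> set p" using p(6) r by (auto simp: successively_Cons)
  then show ?thesis using p(5) by blast
qed

lemma cycle_exists: "\<exists>c. is_cycle E c"
proof -
  have "3 \<le> card V" using card_V_gt_2 by simp
  then obtain x z z2 where xz: "x \<in> V" "z \<in> V" "z2 \<in> V" "x \<noteq> z" "x \<noteq> z2" "z \<noteq> z2"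
    by (rule obtain_three_elements)
  obtain y where y: "y \<in> V" "E x y" using neighbour_avoiding[of "{}" x z] xz by auto
  have yx: "y \<noteq> x" using y E_irrefl by blast
  obtain t where t: "t \<in> V" "t \<noteq> x" "t \<noteq> y" using xz by blast
  obtain z' where z': "z' \<in> V - {x}" "E y z'" using neighbour_avoiding[of "{x}" y t] xz(1) y t yx by auto
  obtain q where q: "q \<noteq> []" "distinct q" "hd q = z'" "last q = x" "set q \<subseteq> V - {y}" "successively E q"
    using path_avoiding[of "{y}" z' x] z' xz(1) y yx E_irrefl by auto
  have yq: "y \<notin> set q" using q(5) by auto
  have zx: "z' \<noteq> x" using z' by auto
  obtain r where r: "q = z' # r" using q(1,3) by (cases q) auto
  have "r \<noteq> []" using r q(4) zx by auto
  then have lq: "2 \<le> length q" using r by (cases r) auto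
  have "is_cycle E (y # q)"
    unfolding is_cycle_iff using lq q yq z'(2) E_sym y(2)
    by (cases q) (auto simp: successively_Cons)
  then show ?thesis by blast
qed

section \<open>Lower bounds\<close>

lemma length_cycle_le_card_V: "is_cycle E c \<Longrightarrow> length c \<le> card V"
  using cycle_in_V finite_V by (metis card_mono distinct_card is_cycle_def)

lemma cummerbund_exists: "\<exists>C. cummerbund E C"
proof -
  obtain c0 where "is_cycle E c0" using cycle_exists by blast
  moreover have "\<forall>c. is_cycle E c \<longrightarrow> length c < card V + 1" using length_cycle_le_card_V by fastforce
  ultimately show ?thesis unfolding cummerbund_def
    using ex_has_greatest_nat[of "is_cycle E" c0 length "card V + 1"] by blast
qed

definition cummerbund_vertices :: "'a set" where
  "cummerbund_vertices = {v \<in> V. \<exists>c. cummerbund E c \<and> v \<in> set c}"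

lemma card_le_cc: "X \<subseteq> cummerbund_vertices \<Longrightarrow> card X \<le> cc V E"
  unfolding cc_def cummerbund_vertices_def by (rule card_mono) (auto simp: finite_V)

lemma set_cummerbund_subset: "cummerbund E C \<Longrightarrow> set C \<subseteq> cummerbund_vertices"
  using cycle_in_V unfolding cummerbund_vertices_def cummerbund_def by blast

lemma cc_ge_cummerbund_plus:
  assumes C: "cummerbund E C" and I: "set I \<subseteq> cummerbund_vertices" "set I \<inter> set C = {}" "distinct I"
  shows "length C + length I \<le> cc V E"
proof -
  have "length C + length I = card (set C \<union> set I)"
    using C I by (simp add: card_Un_disjoint distinct_card cummerbund_def is_cycle_def Int_commute)
  then show ?thesis using set_cummerbund_subset[OF C] I(1) card_le_cc by (metis Un_least)
qed

lemma length_cummerbund_le_cc: "cummerbund E C \<Longrightarrow> length C \<le> cc V E"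
  using cc_ge_cummerbund_plus[of C "[]"] by simp

lemma ear_cycle_lengths:
  assumes C: "cummerbund E C" and g: "girth_at_least E g" and I: "ear E C i I j"
  shows "g \<le> length I + 1 + (j - i)" "length I + 1 + (j - i) \<le> length C"
    and "g \<le> length I + 1 + (length C - (j - i))" "length I + 1 + (length C - (j - i)) \<le> length C"
proof -
  have ij: "i < j" "j < length C" using I unfolding ear_def by auto
  have cyc: "is_cycle E C" using C unfolding cummerbund_def by blast
  note cycles = ear_split_cycles[OF cyc I]
  have len: "length (arc C 0 i @ I @ arc C j (length C - 1)) = length I + 1 + (length C - (j - i))"
    "length (arc C i j @ rev I) = length I + 1 + (j - i)"
    using ij by auto
  show "g \<le> length I + 1 + (j - i)" "g \<le> length I + 1 + (length C - (j - i))"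
    using cycles g len unfolding girth_at_least_def by metis+
  show "length I + 1 + (j - i) \<le> length C" "length I + 1 + (length C - (j - i)) \<le> length C"
    using cycles C len unfolding cummerbund_def by metis+
qed

lemma ear_closing_cummerbund:
  assumes C: "cummerbund E C" and I: "ear E C i I j"
    and long: "length I + 1 + (j - i) = length C \<or> length I + 1 + (length C - (j - i)) = length C"
  shows "set I \<subseteq> cummerbund_vertices" and "length C + length I \<le> cc V E"
proof -
  have ij: "i < j" "j < length C" using I unfolding ear_def by auto
  have cyc: "is_cycle E C" using C unfolding cummerbund_def by blast
  note cycles = ear_split_cycles[OF cyc I]
  have len: "length (arc C 0 i @ I @ arc C j (length C - 1)) = length I + 1 + (length C - (j - i))"
    "length (arc C i j @ rev I) = length I + 1 + (j - i)"
    using ij by auto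
  show sub: "set I \<subseteq> cummerbund_vertices"
    using long cycles C len set_cummerbund_subset unfolding cummerbund_def by (metis set_append set_rev le_sup_iff)
  show "length C + length I \<le> cc V E"
    using cc_ge_cummerbund_plus[OF C sub] I unfolding ear_def by blast
qed

lemma all_vertices_on_cummerbunds:
  assumes C: "cummerbund E C" and g: "girth_at_least E g" and short: "length C < 6 \<or> length C \<le> g"
  shows "cc V E = card V"
proof -
  have cyc: "is_cycle E C" using C unfolding cummerbund_def by blast
  have "V \<subseteq> cummerbund_vertices"
  proof
    fix v assume v: "v \<in> V"
    show "v \<in> cummerbund_vertices"
    proof (cases "v \<in> set C")
      case True then show ?thesis using set_cummerbund_subset[OF C] by blast
    next
      case False
      then obtain i I j where I: "ear E C i I j" "v \<in> set I" using ear_through_vertex[OF cyc v] by blast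
      have "0 < length I" "i < j" "j < length C" using I(1) unfolding ear_def by auto
      then have "length I + 1 + (j - i) = length C \<or> length I + 1 + (length C - (j - i)) = length C"
        using ear_cycle_lengths[OF C g I(1)] short by arith
      then show ?thesis using ear_closing_cummerbund(1)[OF C I(1)] I(2) by blast
    qed
  qed
  then have "cummerbund_vertices = V" unfolding cummerbund_vertices_def by blast
  then show ?thesis unfolding cc_def cummerbund_vertices_def by simp
qed

lemma crossing_ears_bound:
  assumes C: "cummerbund E C" and P: "ear E C a P b" and Q: "ear E C c Q d"
    and PQ: "set P \<inter> set Q = {}" and cross: "crossing a b c d"
  shows "2 * (length P + length Q) + 4 \<le> length C"
    and "2 * (length P + length Q) + 4 = length C \<Longrightarrow> length C + length P \<le> cc V E"
proof -
  have cyc: "is_cycle E C" using C unfolding cummerbund_def by blast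
  obtain D where D: "is_cycle E D" "set P \<subseteq> set D" "2 * (length P + length Q) + length C + 4 \<le> 2 * length D"
  proof (cases "a < c")
    case True
    then show ?thesis using crossing_ears_cycle[OF cyc P Q PQ] cross that unfolding crossing_def by auto
  next
    case False
    then have "\<exists>D. is_cycle E D \<and> set Q \<union> set P \<subseteq> set D
      \<and> 2 * (length Q + length P) + length C + 4 \<le> 2 * length D"
      using crossing_ears_cycle[OF cyc Q P] PQ cross unfolding crossing_def by (auto simp: Int_commute)
    then show ?thesis using that by (auto simp: add.commute)
  qed
  have DC: "length D \<le> length C" using C D(1) unfolding cummerbund_def by blast
  then show "2 * (length P + length Q) + 4 \<le> length C" using D(3) by linarith
  assume "2 * (length P + length Q) + 4 = length C"
  then have "cummerbund E D" using C D(1,3) DC unfolding cummerbund_def by auto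
  then have "set P \<subseteq> cummerbund_vertices" using set_cummerbund_subset D(2) by blast
  then show "length C + length P \<le> cc V E" using cc_ge_cummerbund_plus[OF C] P unfolding ear_def by blast
qed

lemma parallel_ears_bound:
  assumes C: "cummerbund E C" and g: "girth_at_least E g"
    and P: "ear E C a P b" and Q: "ear E C a Q b" and PQ: "set P \<inter> set Q = {}"
  shows "g \<le> length P + length Q + 2"
proof -
  have "is_cycle E (C ! a # P @ C ! b # rev Q)"
    using parallel_ears_cycle[OF _ P Q PQ] C unfolding cummerbund_def by blast
  then show ?thesis using g unfolding girth_at_least_def by fastforce
qed

lemma card_outside_cycle: "is_cycle E C \<Longrightarrow> card (V - set C) = card V - length C"
  using cycle_in_V finite_V by (simp add: card_Diff_subset distinct_card is_cycle_def finite_subset)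

lemma cc_ge_8_if_hexagon_girth_5:
  assumes C: "cummerbund E C" "length C = 6" and g: "girth_at_least E 5" and n: "8 \<le> card V"
  shows "8 \<le> cc V E"
proof (rule ccontr)
  assume cc: "\<not> 8 \<le> cc V E"
  have cyc: "is_cycle E C" using C unfolding cummerbund_def by blast
  have unit_ear: "\<exists>i. ear E C i [v] (i + 3)" if v: "v \<in> V - set C" for v
  proof -
    obtain i I j where I: "ear E C i I j" "v \<in> set I" using ear_through_vertex[OF cyc] v by blast
    have "0 < length I" "i < j" "j < 6" using I(1) C(2) unfolding ear_def by auto
    then have "length I = 1 \<and> j = i + 3"
      using ear_cycle_lengths[OF C(1) g I(1), unfolded C(2)]
        ear_closing_cummerbund(2)[OF C(1) I(1), unfolded C(2)] cc by arith
    then show ?thesis using I by (auto simp: length_Suc_conv)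
  qed
  have "2 \<le> card (V - set C)" using card_outside_cycle[OF cyc] C(2) n by simp
  then obtain v w where vw: "v \<in> V - set C" "w \<in> V - set C" "v \<noteq> w"
    by (rule obtain_two_elements)
  obtain i k where P: "ear E C i [v] (i + 3)" and Q: "ear E C k [w] (k + 3)"
    using unit_ear vw by blast
  have PQ: "set [v] \<inter> set [w] = {}" using vw by simp
  have "i + 3 < 6" "k + 3 < 6" using P Q C(2) unfolding ear_def by auto
  then have "i = k \<or> crossing i (i + 3) k (k + 3)" unfolding crossing_def by arith
  then show False
    using parallel_ears_bound[OF C(1) g P _ PQ] Q crossing_ears_bound(1)[OF C(1) P Q PQ] C(2) by auto
qed

lemma cc_ge_8_if_heptagon_girth_5:
  assumes C: "cummerbund E C" "length C = 7" and g: "girth_at_least E 5" and n: "10 \<le> card V"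
  shows "8 \<le> cc V E"
proof (rule ccontr)
  assume cc: "\<not> 8 \<le> cc V E"
  have cyc: "is_cycle E C" using C unfolding cummerbund_def by blast
  have unit_ear: "\<exists>i j. ear E C i [v] j \<and> (j = i + 3 \<or> j = i + 4)" if v: "v \<in> V - set C" for v
  proof -
    obtain i I j where I: "ear E C i I j" "v \<in> set I" using ear_through_vertex[OF cyc] v by blast
    have "0 < length I" "i < j" "j < 7" using I(1) C(2) unfolding ear_def by auto
    then have "length I = 1 \<and> (j = i + 3 \<or> j = i + 4)"
      using ear_cycle_lengths[OF C(1) g I(1), unfolded C(2)]
        ear_closing_cummerbund(2)[OF C(1) I(1), unfolded C(2)] cc by arith
    moreover from this have "I = [v]" using I(2) by (auto simp: length_Suc_conv)
    ultimately show ?thesis using I(1) by blast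
  qed
  have distinct_ears: "(i, j) \<noteq> (k, l) \<and> \<not> crossing i j k l"
    if P: "ear E C i [v] j" and Q: "ear E C k [w] l" and "v \<noteq> w" for i j k l v w
  proof -
    have PQ: "set [v] \<inter> set [w] = {}" using \<open>v \<noteq> w\<close> by simp
    have "(i, j) \<noteq> (k, l)" using parallel_ears_bound[OF C(1) g P _ PQ] Q by auto
    moreover have "\<not> crossing i j k l" using crossing_ears_bound(1)[OF C(1) P Q PQ] C(2) by auto
    ultimately show ?thesis by blast
  qed
  have "3 \<le> card (V - set C)" using card_outside_cycle[OF cyc] C(2) n by simp
  then obtain u v w where uvw: "u \<in> V - set C" "v \<in> V - set C" "w \<in> V - set C"
    "u \<noteq> v" "u \<noteq> w" "v \<noteq> w"
    by (rule obtain_three_elements)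
  obtain a1 b1 where "ear E C a1 [u] b1" "b1 = a1 + 3 \<or> b1 = a1 + 4" using unit_ear uvw(1) by blast
  moreover obtain a2 b2 where "ear E C a2 [v] b2" "b2 = a2 + 3 \<or> b2 = a2 + 4" using unit_ear uvw(2) by blast
  moreover obtain a3 b3 where "ear E C a3 [w] b3" "b3 = a3 + 3 \<or> b3 = a3 + 4" using unit_ear uvw(3) by blast
  ultimately have ears: "ear E C a1 [u] b1" "ear E C a2 [v] b2" "ear E C a3 [w] b3"
    and spans: "b1 = a1 + 3 \<or> b1 = a1 + 4" "b2 = a2 + 3 \<or> b2 = a2 + 4" "b3 = a3 + 3 \<or> b3 = a3 + 4"
    by blast+
  have "b1 < 7" "b2 < 7" "b3 < 7" using ears C(2) unfolding ear_def by auto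
  then show False
    using heptagon_chords_cross[OF _ _ _ spans] distinct_ears[OF ears(1) ears(2) uvw(4)]
      distinct_ears[OF ears(1) ears(3) uvw(5)] distinct_ears[OF ears(2) ears(3) uvw(6)] by blast
qed

lemma cc_ge_9_if_heptagon_girth_6:
  assumes C: "cummerbund E C" "length C = 7" and g: "girth_at_least E 6" and n: "8 \<le> card V"
  shows "9 \<le> cc V E"
proof (rule ccontr)
  assume cc: "\<not> 9 \<le> cc V E"
  have cyc: "is_cycle E C" using C unfolding cummerbund_def by blast
  have "1 \<le> card (V - set C)" using card_outside_cycle[OF cyc] C(2) n by simp
  then obtain v where "v \<in> V - set C" by (metis card_eq_0_iff equals0I not_one_le_zero)
  then obtain i I j where I: "ear E C i I j" using ear_through_vertex[OF cyc] by blast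
  have ij: "0 < length I" "i < j" "j < 7" using I C(2) unfolding ear_def by auto
  note lengths = ear_cycle_lengths[OF C(1) g I, unfolded C(2)]
  have "\<not> (length I + 1 + (j - i) = 7 \<or> length I + 1 + (7 - (j - i)) = 7)"
  proof
    assume long: "length I + 1 + (j - i) = 7 \<or> length I + 1 + (7 - (j - i)) = 7"
    then have "length I \<le> 1" using ear_closing_cummerbund(2)[OF C(1) I] C(2) cc by linarith
    then show False using long lengths ij by arith
  qed
  then have "length I + 1 + (j - i) = 6" "length I + 1 + (7 - (j - i)) = 6" using lengths by auto
  then show False using ij by presburger
qed

context
  fixes C :: "'a list"
  assumes C: "cummerbund E C" "length C = 8" and g: "girth_at_least E 6" and cc: "cc V E < 9"
begin

lemma octagon_ear:
  assumes I: "ear E C i I j"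
  shows "j = i + 4" and "length I \<le> 2"
proof -
  have "0 < length I" "i < j" "j < 8" using I C(2) unfolding ear_def by auto
  then show "j = i + 4" "length I \<le> 2"
    using ear_cycle_lengths[OF C(1) g I, unfolded C(2)]
      ear_closing_cummerbund(2)[OF C(1) I, unfolded C(2)] cc by arith+
qed

lemma octagon_vertex_anchor:
  assumes v: "v \<in> V - set C"
  shows "\<exists>k<8. E v (C ! k)"
proof -
  have cyc: "is_cycle E C" using C unfolding cummerbund_def by blast
  obtain i I j where I: "ear E C i I j" "v \<in> set I" using ear_through_vertex[OF cyc] v by blast
  have "I \<noteq> []" "i < j" "j < 8" using I(1) C(2) unfolding ear_def by auto
  moreover have "v = hd I \<or> v = last I"
    using octagon_ear(2)[OF I(1)] I(2) by (cases I; cases "tl I") auto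
  ultimately show ?thesis using ear_edges[OF I(1)] E_sym by (metis less_trans)
qed

lemma octagon_unit_ear_meets_every_ear:
  assumes P: "ear E C i [v] j" and Q: "ear E C k Q l"
  shows "v \<in> set Q"
proof (rule ccontr)
  assume "v \<notin> set Q"
  then have PQ: "set [v] \<inter> set Q = {}" by simp
  have "j = i + 4" "l = k + 4" using octagon_ear(1) P Q by blast+
  moreover have "j < 8" "l < 8" using P Q C(2) unfolding ear_def by auto
  ultimately have "i = k \<and> j = l \<or> crossing i j k l" unfolding crossing_def by arith
  moreover have "Q \<noteq> []" using Q unfolding ear_def by blast
  moreover have False if cross: "crossing i j k l"
  proof -
    have "length Q \<le> 1" using crossing_ears_bound(1)[OF C(1) P Q PQ cross] C(2) by simp
    then have "length Q = 1" using \<open>Q \<noteq> []\<close> by (cases Q) auto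
    then show False using crossing_ears_bound(2)[OF C(1) P Q PQ cross] C(2) cc by simp
  qed
  ultimately show False
    using parallel_ears_bound[OF C(1) g P _ PQ] Q octagon_ear(2)[OF Q] by auto
qed

lemma octagon_outside_neighbour:
  assumes two: "2 \<le> card (V - set C)" and v: "v \<in> V - set C"
  shows "\<exists>y \<in> V - set C. E v y"
proof -
  have cyc: "is_cycle E C" using C unfolding cummerbund_def by blast
  have edge_of_pair: "\<exists>y \<in> V - set C. E v y"
    if I: "ear E C i I j" "v \<in> set I" "length I = 2" for i I j
  proof -
    obtain a b where ab: "I = [a, b]" using I(3) by (auto simp: length_Suc_conv numeral_2_eq_2)
    then have "E a b" "a \<notin> set C" "b \<notin> set C" using ear_edges[OF I(1)] I(1) unfolding ear_def by auto
    then show ?thesis using I(2) ab E_sym[OF \<open>E a b\<close>] E_in_V[OF \<open>E a b\<close>] by (cases "v = a") auto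
  qed
  obtain i I j where I: "ear E C i I j" "v \<in> set I" using ear_through_vertex[OF cyc] v by blast
  show ?thesis
  proof (cases "length I = 2")
    case True then show ?thesis using edge_of_pair I by blast
  next
    case False
    moreover have "0 < length I" using I(1) unfolding ear_def by simp
    ultimately have "length I = 1" using octagon_ear(2)[OF I(1)] by linarith
    then have P: "ear E C i [v] j" using I by (auto simp: length_Suc_conv)
    obtain w where w: "w \<in> V - set C" "w \<noteq> v"
      using two by (rule obtain_two_elements) metis
    obtain k Q l where Q: "ear E C k Q l" "w \<in> set Q" using ear_through_vertex[OF cyc] w(1) by blast
    have "card {v, w} \<le> card (set Q)"
      using octagon_unit_ear_meets_every_ear[OF P Q(1)] Q(2) by (intro card_mono) auto
    then have "length Q = 2" using octagon_ear(2)[OF Q(1)] w(2) card_length[of Q] by simp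
    then show ?thesis
      using edge_of_pair Q(1) octagon_unit_ear_meets_every_ear[OF P Q(1)] by blast
  qed
qed

lemma octagon_anchors_opposite:
  assumes v: "v \<in> V - set C" and y: "y \<in> V - set C" and vy: "E v y"
    and k: "k < 8" "E v (C ! k)" and l: "l < 8" "E y (C ! l)"
  shows "l = k + 4 \<or> k = l + 4"
proof -
  have cyc: "is_cycle E C" using C unfolding cummerbund_def by blast
  have ne: "v \<noteq> y" using vy E_irrefl by blast
  have "C ! k \<in> set C" using k(1) C(2) by simp
  show ?thesis
  proof (cases "k = l")
    case True
    then have "is_cycle E [v, y, C ! k]"
      using v y vy k l ne \<open>C ! k \<in> set C\<close> E_sym by (auto simp: is_cycle_iff)
    then show ?thesis using girth_le_length[OF g] by fastforce
  next
    case False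
    then have "ear E C (min k l) (if k < l then [v, y] else rev [v, y]) (max k l)"
      using ear_of_path[of k l C "[v, y]"] v y vy k l ne C(2) E_sym by auto
    then show ?thesis using octagon_ear(1) by (cases "k < l") auto
  qed
qed

lemma octagon_outside_neighbour_unique:
  assumes v: "v \<in> V - set C" and y: "y \<in> V - set C" and z: "z \<in> V - set C"
    and vy: "E v y" and vz: "E v z"
  shows "y = z"
proof (rule ccontr)
  assume yz: "y \<noteq> z"
  obtain k where k: "k < 8" "E v (C ! k)" using octagon_vertex_anchor[OF v] by blast
  obtain l where l: "l < 8" "E y (C ! l)" using octagon_vertex_anchor[OF y] by blast
  obtain m where m: "m < 8" "E z (C ! m)" using octagon_vertex_anchor[OF z] by blast
  have "l = k + 4 \<or> k = l + 4" "m = k + 4 \<or> k = m + 4"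
    using octagon_anchors_opposite[OF v y vy k l] octagon_anchors_opposite[OF v z vz k m] by auto
  then have "m = l" using l(1) m(1) by arith
  have "C ! l \<in> set C" using l(1) C(2) by simp
  then have "is_cycle E [v, y, C ! l, z]"
    using v y z vy vz l m \<open>m = l\<close> yz E_sym E_irrefl by (auto simp: is_cycle_iff)
  then show False using girth_le_length[OF g] by fastforce
qed

lemma octagon_outside_even:
  assumes two: "2 \<le> card (V - set C)"
  shows "even (card (V - set C))"
proof -
  let ?O = "V - set C"
  define f where "f v = (THE y. y \<in> ?O \<and> E v y)" for v
  have f: "f v \<in> ?O \<and> E v (f v)" if v: "v \<in> ?O" for v
  proof -
    obtain y where "y \<in> ?O" "E v y" using octagon_outside_neighbour[OF two v] by blast
    then have "\<exists>!y. y \<in> ?O \<and> E v y" using octagon_outside_neighbour_unique v by blast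
    then show ?thesis unfolding f_def by (rule theI')
  qed
  have "f x \<in> ?O \<and> f x \<noteq> x \<and> f (f x) = x" if "x \<in> ?O" for x
    using f[OF that] f[of "f x"] octagon_outside_neighbour_unique[OF _ _ that] E_sym E_irrefl that by metis
  then show ?thesis using even_card_if_involution[of ?O f] finite_V by blast
qed

end

theorem cc_ge_6_if_girth_4:
  assumes g: "girth_at_least E 4" and n: "8 \<le> card V"
  shows "6 \<le> cc V E"
proof -
  obtain C where C: "cummerbund E C" using cummerbund_exists by blast
  show ?thesis
  proof (cases "length C < 6")
    case True then show ?thesis using all_vertices_on_cummerbunds[OF C g] n by simp
  next
    case False then show ?thesis using length_cummerbund_le_cc[OF C] by simp
  qed
qed

theorem cc_ge_8_if_girth_5:
  assumes g: "girth_at_least E 5" and n: "10 \<le> card V"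
  shows "8 \<le> cc V E"
proof -
  obtain C where C: "cummerbund E C" using cummerbund_exists by blast
  consider "length C < 6" | "length C = 6" | "length C = 7" | "8 \<le> length C" by linarith
  then show ?thesis
  proof cases
    case 1 then show ?thesis using all_vertices_on_cummerbunds[OF C g] n by simp
  next
    case 2 then show ?thesis using cc_ge_8_if_hexagon_girth_5[OF C _ g] n by simp
  next
    case 3 then show ?thesis using cc_ge_8_if_heptagon_girth_5[OF C _ g n] by simp
  next
    case 4 then show ?thesis using length_cummerbund_le_cc[OF C] by simp
  qed
qed

theorem cc_ge_if_girth_6:
  assumes g: "girth_at_least E 6" and n: "12 \<le> card V"
  shows "8 \<le> cc V E" and "odd (card V) \<Longrightarrow> 9 \<le> cc V E"
proof -
  obtain C where C: "cummerbund E C" using cummerbund_exists by blast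
  have cyc: "is_cycle E C" using C unfolding cummerbund_def by blast
  have "6 \<le> length C" using girth_le_length[OF g cyc] .
  then consider "length C = 6" | "length C = 7" | "length C = 8" | "9 \<le> length C" by linarith
  then have "8 \<le> cc V E \<and> (odd (card V) \<longrightarrow> 9 \<le> cc V E)"
  proof cases
    case 1 then show ?thesis using all_vertices_on_cummerbunds[OF C g] n by simp
  next
    case 2 then show ?thesis using cc_ge_9_if_heptagon_girth_6[OF C _ g] n by simp
  next
    case 3
    have "even (card V)" if "cc V E < 9"
    proof -
      have "card (V - set C) = card V - 8" using card_outside_cycle[OF cyc] 3 by simp
      then show ?thesis using octagon_outside_even[OF C 3 g that] n by simp
    qed
    then show ?thesis using length_cummerbund_le_cc[OF C] 3 by fastforce
  next
    case 4 then show ?thesis using length_cummerbund_le_cc[OF C] by simp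
  qed
  then show "8 \<le> cc V E" and "odd (card V) \<Longrightarrow> 9 \<le> cc V E" by auto
qed

end

lemma cc_values_girth_mono: "x \<in> cc_values n g \<Longrightarrow> g' \<le> g \<Longrightarrow> x \<in> cc_values n g'"
  unfolding cc_values_def girth_at_least_def by fastforce

lemma is_minimum_cc_valuesI:
  assumes "m \<in> cc_values n g"
    and "\<And>(V :: nat set) E. biconnected V E \<Longrightarrow> card V = n \<Longrightarrow> girth_at_least E g \<Longrightarrow> m \<le> cc V E"
  shows "is_minimum (cc_values n g) m"
  using assms unfolding is_minimum_def cc_values_def biconnected_def sgraph_def biconnected_axioms_def
  by blast

theorem theorem16:
  shows "(\<forall>n::nat. n \<ge> 8 \<longrightarrow> is_minimum (cc_values n 4) 6)
       \<and> (\<forall>n::nat. n \<ge> 10 \<longrightarrow> is_minimum (cc_values n 5) 8)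
       \<and> (\<forall>n::nat. n \<ge> 12 \<and> even n \<longrightarrow> is_minimum (cc_values n 6) 8)
       \<and> (\<forall>n::nat. n \<ge> 13 \<and> odd n \<longrightarrow> is_minimum (cc_values n 6) 9)"
proof (intro conjI allI impI)
  fix n :: nat
  assume n: "n \<ge> 8"
  show "is_minimum (cc_values n 4) 6"
    by (rule is_minimum_cc_valuesI[OF cc_6_attained_girth_4])
      (use n biconnected.cc_ge_6_if_girth_4 in auto)
next
  fix n :: nat
  assume n: "n \<ge> 10"
  have "8 \<in> cc_values n 5"
    using cc_8_attained_girth_6[of n] cc_8_attained_girth_5_odd[of n] cc_values_girth_mono n by fastforce
  then show "is_minimum (cc_values n 5) 8"
    by (rule is_minimum_cc_valuesI) (use n biconnected.cc_ge_8_if_girth_5 in auto)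
next
  fix n :: nat
  assume n: "n \<ge> 12 \<and> even n"
  show "is_minimum (cc_values n 6) 8"
    by (rule is_minimum_cc_valuesI[OF cc_8_attained_girth_6])
      (use n biconnected.cc_ge_if_girth_6(1) in auto)
next
  fix n :: nat
  assume n: "n \<ge> 13 \<and> odd n"
  show "is_minimum (cc_values n 6) 9"
    by (rule is_minimum_cc_valuesI[OF cc_9_attained_girth_6])
      (use n biconnected.cc_ge_if_girth_6(2) in fastforce)+
qed

end
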